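(* Let $s>0$, $0<\sigma_1\le s$ and $r<\mu_1<\mu_2$, and assume $\frac{\mu_1-r}{s^2}\in(0,1]$. Suppose that under $\mathbb{Q}$, $\ln S_T\sim N\big(\ln S_0+(r-\tfrac{s^2}{2})T,\,s^2T\big)$, and let $\mathcal{P}=\{\mathbb{P}^{\mu,\sigma}:\mu_1\le\mu\le\mu_2,\ \sigma_1\le\sigma\le s\}$, where under $\mathbb{P}^{\mu,\sigma}$, $\ln S_T\sim N\big(\ln S_0+(\mu-\tfrac{\sigma^2}{2})T,\,\sigma^2T\big)$. Then: (i) $F_{S_T}^{\mathbb{P}^{\mu_1,s}}\preceq_{\mathbb{F}_{SSD}}F_{S_T}^{\mathbb{P}^{\mu,\sigma}}$ for all $\mu\in[\mu_1,\mu_2]$, $\sigma\in[\sigma_1,s]$; (ii) $\mathbb{P}^*:=\mathbb{P}^{\mu_1,s}$ is a least favorable measure with respect to $\mathbb{F}_{SSD}$, and with $\ell^*=\ell^{\mathbb{P}^{\mu_1,s}}$ the map $x\mapsto F^{\mathbb{P}^*}_{\ell^*}(x)$ is continuous and $1/\ell^*$ has finite variance under $\mathbb{P}^*$; (iii) for every cdf $F_0$ with $\int_0^1(F_0^{-1}(u))^2du<\infty$, $F_0(x)=0$ for $x<0$, and such that $F_0^{-1}\circ F^{\mathbb{P}^*}_{\ell^*}$ is concave, the $\mathbb{F}_{SSD}$-robust cost-efficiency problem for $F_0$ has the $\mathbb{P}^*$-a.s. unique solution $X^*=F_0^{-1}\big(F_{S_T}^{\mathbb{P}^{\mu_1,s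}}(S_T)\big)$.
   Context: Standing setting: fix $T>0$, $r\in\mathbb{R}$, $S_0>0$, and write $\mathbb{R}_+=[0,\infty)$. $S_T:\Omega\to\mathbb{R}_+$ is a random variable, $\mathcal{F}=\sigma(S_T)$ (so a probability measure on $(\Omega,\mathcal{F})$ is determined by the law of $S_T$). The set of payoffs is $\mathcal{X}=\{g(S_T): g:\mathbb{R}_+\to\mathbb{R}_+\text{ measurable}, E_{\mathbb{Q}}[|g(S_T)|]<\infty\}$, and the price of $X\in\mathcal{X}$ is $e^{-rT}E_{\mathbb{Q}}[X]$. For $\mathbb{P}\in\mathcal{P}$, $\ell^{\mathbb{P}}=d\mathbb{P}/d\mathbb{Q}$; $F_X^{\mathbb{P}}$ is the cdf of $X$ under $\mathbb{P}$; for a cdf $F$, $F^{-1}(p)=\inf\{x:F(x)\ge p\}$. For a set $\mathbb{F}$ of measurable functions $\mathbb{R}_+\to\mathbb{R}$ and cdfs $F,G$ on $\mathbb{R}_+$, $F\preceq_{\mathbb{F}}G$ means $\int f\,dF\le\int f\,dG$ for all $f\in\mathbb{F}$ with finite integrals. $\mathbb{F}_{SSD}$ is the set of all non-decreasing concave functions $\mathbb{R}_+\to\mathbb{R}$. A measure $\mathbb{P}^*\in\mathcal{P}$ with $\ell^*=d\mathbb{P}^*/d\mathbb{Q}$ is least favorable w.r.t. $\mathbb{F}$ if $F_{\ell^*}^{\mathbb{P}^*}\preceq_{\mathbb{F}}F_{\ell^*}^{\mathbb{P}}$ for all $\mathbb{P}\in\mathcal{P}$. The $\mathbb{F}$-robust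 cost-efficiency problem for a cdf $F_0$ is $\inf\{e^{-rT}E_{\mathbb{Q}}[X]: X\in\mathcal{X},\ F_0\preceq_{\mathbb{F}}F_X^{\mathbb{P}}\ \forall\mathbb{P}\in\mathcal{P}\}$. *)

theory Defs
  imports "HOL-Probability.Probability"
begin

text \<open>Canonical model: the sample space is the real line with its Borel sets and
  S_T is the identity (all measures below give the set of positive reals probability 1,
  so effectively the sample space is the range (0,oo) of S_T).  A payoff g(S_T) is thus
  a function g :: real => real.\<close>

definition lognormal :: "real \<Rightarrow> real \<Rightarrow> real measure" where
  "lognormal m v = distr (density lborel (normal_density m (sqrt v))) borel exp"

text \<open>Law of S_T when ln S_T ~ N(ln S0 + (mu - sg^2/2) T, sg^2 T).
  Q is model_measure S0 T r s, and P^{mu,sg} is model_measure S0 T mu sg.\<close>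
definition model_measure :: "real \<Rightarrow> real \<Rightarrow> real \<Rightarrow> real \<Rightarrow> real measure" where
  "model_measure S0 T mu sg = lognormal (ln S0 + (mu - sg\<^sup>2 / 2) * T) (sg\<^sup>2 * T)"

definition model_set :: "real \<Rightarrow> real \<Rightarrow> real \<Rightarrow> real \<Rightarrow> real \<Rightarrow> real \<Rightarrow> real measure set" where
  "model_set S0 T mu1 mu2 sigma1 s =
     {model_measure S0 T mu sg | mu sg. mu1 \<le> mu \<and> mu \<le> mu2 \<and> sigma1 \<le> sg \<and> sg \<le> s}"

definition law :: "real measure \<Rightarrow> (real \<Rightarrow> real) \<Rightarrow> real measure" where
  "law P X = distr P borel X"

definition quantile :: "(real \<Rightarrow> real) \<Rightarrow> real \<Rightarrow> real" where
  "quantile F p = Inf {x. p \<le> F x}"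

definition preceq :: "(real \<Rightarrow> real) set \<Rightarrow> real measure \<Rightarrow> real measure \<Rightarrow> bool" where
  "preceq Fs D1 D2 \<longleftrightarrow>
     (\<forall>f\<in>Fs. set_integrable D1 {0..} f \<and> set_integrable D2 {0..} f \<longrightarrow>
        (LINT x:{0..}|D1. f x) \<le> (LINT x:{0..}|D2. f x))"

definition F_SSD :: "(real \<Rightarrow> real) set" where
  "F_SSD = {f. mono_on {0..} f \<and> concave_on {0..} f}"

definition lr :: "real measure \<Rightarrow> real measure \<Rightarrow> real \<Rightarrow> real" where
  "lr Q P x = enn2real (RN_deriv Q P x)"

definition least_favorable ::
  "(real \<Rightarrow> real) set \<Rightarrow> real measure \<Rightarrow> real measure set \<Rightarrow> real measure \<Rightarrow> bool" where
  "least_favorable Fs Q Ps Pstar \<longleftrightarrow> Pstar \<in> Ps \<and>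
     (\<forall>P\<in>Ps. preceq Fs (law Pstar (lr Q Pstar)) (law P (lr Q Pstar)))"

text \<open>Payoffs g(S_T), g : R_+ -> R_+ measurable, Q-integrable (g only matters on the
  range (0,oo) of S_T).\<close>
definition payoffs :: "real measure \<Rightarrow> (real \<Rightarrow> real) set" where
  "payoffs Q = {X. X \<in> borel_measurable borel \<and> (\<forall>x>0. 0 \<le> X x) \<and> integrable Q X}"

definition price :: "real \<Rightarrow> real \<Rightarrow> real measure \<Rightarrow> (real \<Rightarrow> real) \<Rightarrow> real" where
  "price r T Q X = exp (- r * T) * integral\<^sup>L Q X"

definition rce_feasible ::
  "(real \<Rightarrow> real) set \<Rightarrow> real measure \<Rightarrow> real measure set \<Rightarrow> real measure \<Rightarrow> (real \<Rightarrow> real) set" where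
  "rce_feasible Fs Q Ps D0 = {X \<in> payoffs Q. \<forall>P\<in>Ps. preceq Fs D0 (law P X)}"

definition rce_unique_solution ::
  "(real \<Rightarrow> real) set \<Rightarrow> real \<Rightarrow> real \<Rightarrow> real measure \<Rightarrow> real measure set \<Rightarrow> real measure
     \<Rightarrow> real measure \<Rightarrow> (real \<Rightarrow> real) \<Rightarrow> bool" where
  "rce_unique_solution Fs r T Q Ps D0 Pstar Xs \<longleftrightarrow>
     Xs \<in> rce_feasible Fs Q Ps D0 \<and>
     (\<forall>X\<in>rce_feasible Fs Q Ps D0. price r T Q Xs \<le> price r T Q X) \<and>
     (\<forall>X\<in>rce_feasible Fs Q Ps D0. price r T Q X = price r T Q Xs \<longrightarrow> (AE x in Pstar. X x = Xs x))"

end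

theory Submission
  imports Defs
begin

text \<open>Under every model \<open>ln S_T\<close> is normal and \<open>E S_T = S0 exp (\<mu> T)\<close>. Passing from
  \<open>(\<mu>, \<sigma>)\<close> to \<open>(\<mu>1, s)\<close> lowers the mean and adds an independent normal factor to \<open>ln S_T\<close>,
  so by Jensen's inequality \<open>S_T\<close> decreases in the increasing concave order. The likelihood
  ratio \<open>dP*/dQ = C S_T\<^sup>a\<close> with \<open>0 < a \<le> 1\<close> is a non-negative increasing concave function of
  \<open>S_T\<close>, so it inherits the order, which makes \<open>P*\<close> least favourable.

  For the cost-efficiency problem, \<open>X* = quantile F0 (F S_T)\<close> has law \<open>F0\<close> under \<open>P*\<close> and is an
  increasing concave function of \<open>S_T\<close>, hence feasible under every model. By the layer-cake
  formula for the decreasing density \<open>dQ/dP* = 1/(C S_T\<^sup>a)\<close>, the price of a payoff \<open>X\<close> is an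
  integral of its truncated expectations \<open>E_P*[X; S_T < b]\<close>. Testing feasibility of \<open>X\<close>
  against \<open>x \<mapsto> min x (X*(b))\<close> shows that \<open>X*\<close> minimises each truncated expectation; equal
  prices force them all to agree, which determines \<open>X\<close> almost surely.\<close>

abbreviation normal_measure :: "real \<Rightarrow> real \<Rightarrow> real measure" where
  "normal_measure m \<sigma> \<equiv> density lborel (normal_density m \<sigma>)"

abbreviation lognormal_measure :: "real \<Rightarrow> real \<Rightarrow> real measure" where
  "lognormal_measure m \<sigma> \<equiv> distr (normal_measure m \<sigma>) borel exp"

lemma normal_density_times_exp:
  assumes "\<sigma> > 0"
  shows "normal_density m \<sigma> y * exp (c * y) =
    exp (c * m + c\<^sup>2 * \<sigma>\<^sup>2 / 2) * normal_density (m + c * \<sigma>\<^sup>2) \<sigma> y"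
proof -
  have "- ((y - m)\<^sup>2) / (2 * \<sigma>\<^sup>2) + c * y =
      c * m + c\<^sup>2 * \<sigma>\<^sup>2 / 2 + (- ((y - (m + c * \<sigma>\<^sup>2))\<^sup>2) / (2 * \<sigma>\<^sup>2))"
    using assms by (simp add: field_simps power2_eq_square)
  then have "exp (- ((y - m)\<^sup>2) / (2 * \<sigma>\<^sup>2)) * exp (c * y) =
      exp (c * m + c\<^sup>2 * \<sigma>\<^sup>2 / 2) * exp (- ((y - (m + c * \<sigma>\<^sup>2))\<^sup>2) / (2 * \<sigma>\<^sup>2))"
    by (simp only: exp_add[symmetric])
  then show ?thesis
    unfolding normal_density_def by (simp add: ac_simps)
qed

lemma has_bochner_integral_normal_exp:
  assumes "\<sigma> > 0"
  shows "has_bochner_integral (normal_measure m \<sigma>) (\<lambda>y. exp (c * y)) (exp (c * m + c\<^sup>2 * \<sigma>\<^sup>2 / 2))"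
proof -
  have "has_bochner_integral lborel
      (\<lambda>y. exp (c * m + c\<^sup>2 * \<sigma>\<^sup>2 / 2) * normal_density (m + c * \<sigma>\<^sup>2) \<sigma> y) (exp (c * m + c\<^sup>2 * \<sigma>\<^sup>2 / 2) * 1)"
    by (intro has_bochner_integral_mult_right) (simp add: has_bochner_integral_iff assms)
  then have "has_bochner_integral lborel
      (\<lambda>y. normal_density m \<sigma> y *\<^sub>R exp (c * y)) (exp (c * m + c\<^sup>2 * \<sigma>\<^sup>2 / 2))"
    using normal_density_times_exp[OF assms] by simp
  then show ?thesis
    by (intro has_bochner_integral_density) auto
qed

lemma distr_std_normal_affine:
  assumes "\<sigma> > 0"
  shows "distr (normal_measure 0 1) lborel (\<lambda>z. m + \<sigma> * z) = normal_measure m \<sigma>"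
proof -
  interpret prob_space "normal_measure 0 1" by (rule prob_space_normal_density) simp
  have "distributed (normal_measure 0 1) lborel (\<lambda>x. x) (normal_density 0 1)"
    unfolding distributed_def by (simp add: distr_id2)
  then have "distributed (normal_measure 0 1) lborel (\<lambda>x. m + \<sigma> * x)
      (normal_density (m + \<sigma> * 0) (\<bar>\<sigma>\<bar> * 1))"
    by (rule normal_density_affine) (use assms in auto)
  then show ?thesis using assms unfolding distributed_def by simp
qed

lemma lognormal_measure_std_normal:
  assumes "\<sigma> > 0"
  shows "lognormal_measure m \<sigma> = distr (normal_measure 0 1) borel (\<lambda>z. exp (m + \<sigma> * z))"
  unfolding distr_std_normal_affine[OF assms, symmetric]
  by (subst distr_distr) (auto simp: comp_def)

lemma distr_std_normal_pair_affine:
  assumes "a > 0" "b > 0"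
  shows "distr (normal_measure 0 1 \<Otimes>\<^sub>M normal_measure 0 1) lborel (\<lambda>p. m + a * fst p + b * snd p)
       = normal_measure m (sqrt (a\<^sup>2 + b\<^sup>2))"
proof -
  define G where "G = normal_measure 0 1"
  interpret G: prob_space G unfolding G_def by (rule prob_space_normal_density) simp
  interpret P: pair_prob_space G G by unfold_locales
  have [simp, measurable_cong]: "sets G = sets borel" by (simp add: G_def)
  have fst_G: "distr (G \<Otimes>\<^sub>M G) lborel fst = G"
    using G.distr_pair_fst by (subst distr_cong[where L=G]) auto
  have snd_G: "distr (G \<Otimes>\<^sub>M G) lborel snd = G"
  proof -
    have "distr (G \<Otimes>\<^sub>M G) lborel snd = distr (distr (G \<Otimes>\<^sub>M G) (G \<Otimes>\<^sub>M G) (\<lambda>(x, y). (y, x))) lborel snd"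
      by (simp only: P.distr_pair_swap[symmetric])
    also have "\<dots> = distr (G \<Otimes>\<^sub>M G) lborel fst"
      by (subst distr_distr) (auto simp: comp_def split_beta intro!: distr_cong)
    finally show ?thesis using fst_G by simp
  qed
  have indep: "P.indep_var borel fst borel snd"
  proof (subst P.indep_var_distribution_eq, intro conjI)
    have "distr (G \<Otimes>\<^sub>M G) (borel \<Otimes>\<^sub>M borel) (\<lambda>x. (fst x, snd x)) = G \<Otimes>\<^sub>M G"
      by (simp, rule distr_id2) (intro sets_pair_measure_cong; simp)
    then show "distr (G \<Otimes>\<^sub>M G) borel fst \<Otimes>\<^sub>M distr (G \<Otimes>\<^sub>M G) borel snd =
        distr (G \<Otimes>\<^sub>M G) (borel \<Otimes>\<^sub>M borel) (\<lambda>x. (fst x, snd x))"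
      using fst_G snd_G by (simp add: distr_cong[of "G \<Otimes>\<^sub>M G" _ borel lborel])
  qed measurable
  have fst_normal: "distributed (G \<Otimes>\<^sub>M G) lborel fst (normal_density 0 1)"
    and snd_normal: "distributed (G \<Otimes>\<^sub>M G) lborel snd (normal_density 0 1)"
    unfolding distributed_def using fst_G snd_G by (simp_all add: G_def)
  have "distributed (G \<Otimes>\<^sub>M G) lborel (\<lambda>x. m + a * fst x) (normal_density (m + a * 0) (\<bar>a\<bar> * 1))"
    by (rule P.normal_density_affine[OF fst_normal]) (use assms in auto)
  moreover have "distributed (G \<Otimes>\<^sub>M G) lborel (\<lambda>x. 0 + b * snd x) (normal_density (0 + b * 0) (\<bar>b\<bar> * 1))"
    by (rule P.normal_density_affine[OF snd_normal]) (use assms in auto)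
  moreover have "P.indep_var borel ((\<lambda>x. m + a * x) \<circ> fst) borel ((\<lambda>x. 0 + b * x) \<circ> snd)"
    by (rule P.indep_var_compose[OF indep]) auto
  ultimately have "distributed (G \<Otimes>\<^sub>M G) lborel (\<lambda>x. (m + a * fst x) + (0 + b * snd x))
      (normal_density (m + 0) (sqrt (a\<^sup>2 + b\<^sup>2)))"
    using assms by (intro P.add_indep_normal[where \<sigma>=a and \<tau>=b]) (auto simp: comp_def)
  then show ?thesis
    unfolding distributed_def by (simp add: add.assoc G_def)
qed

lemma real_distribution_lognormal_measure: "\<sigma> > 0 \<Longrightarrow> real_distribution (lognormal_measure m \<sigma>)"
  by (rule prob_space.real_distribution_distr[OF prob_space_normal_density]) auto

lemma AE_lognormal_measure_pos: "AE x in lognormal_measure m \<sigma>. x > 0"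
  by (subst AE_distr_iff) auto

lemma emeasure_lognormal_measure_countable:
  assumes "countable (A \<inter> {0<..})" "A \<in> sets borel"
  shows "emeasure (lognormal_measure m \<sigma>) A = 0"
proof -
  have "exp -` A = ln ` (A \<inter> {0<..})" by (auto simp: image_iff intro!: bexI[of _ "exp _"])
  then have "exp -` A \<in> null_sets lborel"
    using assms(1) by (auto intro: countable_imp_null_set_lborel)
  then have "exp -` A \<in> null_sets (normal_measure m \<sigma>)"
    by (subst null_sets_density_iff) (auto elim: AE_mp[OF AE_not_in])
  then show ?thesis using assms(2) by (subst emeasure_distr) auto
qed

lemma emeasure_normal_measure_pos:
  assumes "\<sigma> > 0" "a < b" "{a..b} \<subseteq> A" "A \<in> sets borel"
  shows "emeasure (normal_measure m \<sigma>) A > 0"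
proof (rule ccontr)
  assume "\<not> emeasure (normal_measure m \<sigma>) A > 0"
  then have "A \<in> null_sets (normal_measure m \<sigma>)" using assms(4) by auto
  then have "AE x in lborel. x \<in> A \<longrightarrow> ennreal (normal_density m \<sigma> x) = 0"
    by (subst (asm) null_sets_density_iff) auto
  then have "AE x in lborel. x \<notin> A"
    by eventually_elim (metis ennreal_eq_0_iff not_le normal_density_pos[OF assms(1)])
  then have "emeasure lborel A = 0" using assms(4) by (subst (asm) AE_iff_measurable[of A]) auto
  moreover have "emeasure lborel {a..b} \<le> emeasure lborel A" using assms by (intro emeasure_mono) auto
  ultimately show False using assms(2) by simp
qed

lemma cdf_lognormal_measure_strict:
  assumes "\<sigma> > 0" "x > 0"
  shows "0 < cdf (lognormal_measure m \<sigma>) x \<and> cdf (lognormal_measure m \<sigma>) x < 1"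
proof -
  interpret real_distribution "lognormal_measure m \<sigma>" by (rule real_distribution_lognormal_measure[OF assms(1)])
  have "exp -` {..x} = {..ln x}" "exp -` {x<..} = {ln x<..}"
    using ln_ge_iff[OF assms(2)] by (auto simp: not_le[symmetric])
  then have "emeasure (lognormal_measure m \<sigma>) {..x} > 0" "emeasure (lognormal_measure m \<sigma>) {x<..} > 0"
    by (simp_all add: emeasure_distr emeasure_normal_measure_pos[OF assms(1), of "ln x - 1" "ln x"]
        emeasure_normal_measure_pos[OF assms(1), of "ln x + 1" "ln x + 2"] subset_eq)
  moreover have "prob {..x} + prob {x<..} = prob ({..x} \<union> {x<..})"
    by (rule finite_measure_Union[symmetric]) auto
  moreover have "{..x} \<union> {x<..} = space (lognormal_measure m \<sigma>)" by auto
  ultimately show ?thesis using prob_space by (auto simp: cdf_def emeasure_eq_measure)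
qed

lemma continuous_cdf_distr_lognormal_measure:
  assumes "\<sigma> > 0" and [measurable]: "h \<in> borel_measurable borel" and "inj_on h {0<..}"
  shows "continuous_on UNIV (cdf (distr (lognormal_measure m \<sigma>) borel h))"
proof -
  interpret prob_space "lognormal_measure m \<sigma>"
    by (rule real_distribution.axioms[OF real_distribution_lognormal_measure[OF assms(1)]])
  interpret D: real_distribution "distr (lognormal_measure m \<sigma>) borel h"
    by (rule real_distribution_distr) simp
  have "countable (h -` {y} \<inter> {0<..})" for y
  proof (cases "h -` {y} \<inter> {0<..} = {}")
    case False
    then obtain z where "z \<in> h -` {y} \<inter> {0<..}" by auto
    then have "h -` {y} \<inter> {0<..} \<subseteq> {z}" using \<open>inj_on h {0<..}\<close> by (auto dest: inj_onD)
    then show ?thesis by (rule countable_subset) simp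
  qed simp
  then have "emeasure (lognormal_measure m \<sigma>) (h -` {y}) = 0" for y
    using measurable_sets[OF assms(2), of "{y}"] by (intro emeasure_lognormal_measure_countable) auto
  then have "measure (distr (lognormal_measure m \<sigma>) borel h) {y} = 0" for y
    by (simp add: measure_def emeasure_distr)
  then show ?thesis by (simp add: continuous_on_eq_continuous_at D.isCont_cdf)
qed

lemma integrable_lognormal_measure_powr:
  assumes "\<sigma> > 0"
  shows "integrable (lognormal_measure m \<sigma>) (\<lambda>x. x powr c)"
proof -
  have "integrable (normal_measure m \<sigma>) (\<lambda>y. exp (c * y))"
    using has_bochner_integral_normal_exp[OF assms] by (simp add: has_bochner_integral_iff)
  then show ?thesis by (subst integrable_distr_eq) (auto simp: powr_def mult.commute)
qed

lemma lognormal_measure_density: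
  assumes "\<sigma>1 > 0" "\<sigma>2 > 0"
  shows "lognormal_measure m2 \<sigma>2 = density (lognormal_measure m1 \<sigma>1)
     (\<lambda>x. ennreal (normal_density m2 \<sigma>2 (ln x) / normal_density m1 \<sigma>1 (ln x)))"
proof -
  have "ennreal (normal_density m1 \<sigma>1 x) * ennreal (normal_density m2 \<sigma>2 x / normal_density m1 \<sigma>1 x) =
      ennreal (normal_density m2 \<sigma>2 x)" for x
    using normal_density_pos[OF assms(1), of m1 x] by (simp add: ennreal_mult[symmetric])
  then show ?thesis
    by (subst density_distr) (auto simp: density_density_eq)
qed

lemma normal_density_ln_ratio:
  assumes "\<sigma> > 0" "x > 0"
  shows "normal_density m2 \<sigma> (ln x) / normal_density m1 \<sigma> (ln x)
       = exp (- (m2\<^sup>2 - m1\<^sup>2) / (2 * \<sigma>\<^sup>2)) * x powr ((m2 - m1) / \<sigma>\<^sup>2)"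
proof -
  have "- ((ln x - m2)\<^sup>2) / (2 * \<sigma>\<^sup>2) - (- ((ln x - m1)\<^sup>2) / (2 * \<sigma>\<^sup>2)) =
      - (m2\<^sup>2 - m1\<^sup>2) / (2 * \<sigma>\<^sup>2) + ((m2 - m1) / \<sigma>\<^sup>2) * ln x"
    using assms by (simp add: field_simps power2_eq_square)
  then show ?thesis
    using assms unfolding normal_density_def by (simp add: exp_diff[symmetric] exp_add powr_def)
qed

definition icv_le :: "real measure \<Rightarrow> real measure \<Rightarrow> bool" where
  "icv_le P1 P2 \<longleftrightarrow> (\<forall>g \<in> borel_measurable borel. mono_on {0<..} g \<longrightarrow> concave_on {0<..} g \<longrightarrow>
     integrable P1 g \<longrightarrow> integrable P2 g \<longrightarrow> integral\<^sup>L P1 g \<le> integral\<^sup>L P2 g)"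

lemma icv_leD:
  "icv_le P1 P2 \<Longrightarrow> g \<in> borel_measurable borel \<Longrightarrow> mono_on {0<..} g \<Longrightarrow> concave_on {0<..} g \<Longrightarrow>
    integrable P1 g \<Longrightarrow> integrable P2 g \<Longrightarrow> integral\<^sup>L P1 g \<le> integral\<^sup>L P2 g"
  unfolding icv_le_def by blast

lemma integral_concave_exp_std_normal_le:
  assumes "concave_on {0<..} g" "integrable (normal_measure 0 1) (\<lambda>w. g (exp (m + b * w)))"
  shows "(\<integral>w. g (exp (m + b * w)) \<partial>normal_measure 0 1) \<le> g (exp (m + b\<^sup>2 / 2))"
proof -
  interpret prob_space "normal_measure 0 1" by (rule prob_space_normal_density) simp
  have "has_bochner_integral (normal_measure 0 1) (\<lambda>w. exp m * exp (b * w)) (exp m * exp (b\<^sup>2 / 2))"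
    using has_bochner_integral_normal_exp[of 1 0 b] by (intro has_bochner_integral_mult_right) simp
  then have mean: "has_bochner_integral (normal_measure 0 1) (\<lambda>w. exp (m + b * w)) (exp (m + b\<^sup>2 / 2))"
    by (simp add: exp_add)
  have "- g (expectation (\<lambda>w. exp (m + b * w))) \<le> expectation (\<lambda>w. - g (exp (m + b * w)))"
  proof (rule jensens_inequality[where I="{0<..}" and q="\<lambda>x. - g x"])
    show "convex_on {0<..} (\<lambda>x. - g x)" using assms(1) by (simp add: concave_on_def)
  qed (use mean assms(2) in \<open>auto simp: has_bochner_integral_iff\<close>)
  then show ?thesis using mean by (simp add: has_bochner_integral_iff)
qed

text \<open>Write the smaller law as \<open>exp (m1 + \<sigma>2 Z + b W)\<close> with \<open>b\<^sup>2 = \<sigma>1\<^sup>2 - \<sigma>2\<^sup>2\<close> and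
  independent standard normals \<open>Z, W\<close>, and apply Jensen's inequality in \<open>W\<close> for fixed \<open>Z\<close>:
  the conditional mean \<open>exp (m1 + \<sigma>2 Z + b\<^sup>2/2)\<close> is at most \<open>exp (m2 + \<sigma>2 Z)\<close>.\<close>
lemma icv_le_lognormal_measure:
  assumes \<sigma>1: "\<sigma>1 > 0" and \<sigma>2: "\<sigma>2 > 0" and "\<sigma>2 \<le> \<sigma>1"
    and mean: "m1 + \<sigma>1\<^sup>2 / 2 \<le> m2 + \<sigma>2\<^sup>2 / 2"
  shows "icv_le (lognormal_measure m1 \<sigma>1) (lognormal_measure m2 \<sigma>2)"
  unfolding icv_le_def
proof (intro ballI impI)
  fix g :: "real \<Rightarrow> real"
  assume [measurable]: "g \<in> borel_measurable borel" and g_mono: "mono_on {0<..} g"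
    and g_concave: "concave_on {0<..} g"
    and int1: "integrable (lognormal_measure m1 \<sigma>1) g" and int2: "integrable (lognormal_measure m2 \<sigma>2) g"
  define G where "G = normal_measure 0 1"
  interpret G: prob_space G unfolding G_def by (rule prob_space_normal_density) simp
  have [simp, measurable_cong]: "sets G = sets borel" by (simp add: G_def)
  have L2: "lognormal_measure m2 \<sigma>2 = distr G borel (\<lambda>z. exp (m2 + \<sigma>2 * z))"
    using lognormal_measure_std_normal[OF \<sigma>2] by (simp add: G_def)
  have int2': "integrable G (\<lambda>z. g (exp (m2 + \<sigma>2 * z)))"
    using int2 unfolding L2 by (subst (asm) integrable_distr_eq) auto
  have I2: "integral\<^sup>L (lognormal_measure m2 \<sigma>2) g = (\<integral>z. g (exp (m2 + \<sigma>2 * z)) \<partial>G)"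
    unfolding L2 by (subst integral_distr) auto
  show "integral\<^sup>L (lognormal_measure m1 \<sigma>1) g \<le> integral\<^sup>L (lognormal_measure m2 \<sigma>2) g"
  proof (cases "\<sigma>2 = \<sigma>1")
    case True
    have L1: "lognormal_measure m1 \<sigma>1 = distr G borel (\<lambda>z. exp (m1 + \<sigma>2 * z))"
      using lognormal_measure_std_normal[OF \<sigma>1] True by (simp add: G_def)
    have int1': "integrable G (\<lambda>z. g (exp (m1 + \<sigma>2 * z)))"
      using int1 unfolding L1 by (subst (asm) integrable_distr_eq) auto
    have "g (exp (m1 + \<sigma>2 * z)) \<le> g (exp (m2 + \<sigma>2 * z))" for z
      using mean True by (intro mono_onD[OF g_mono]) auto
    then show ?thesis unfolding L1 I2 by (subst integral_distr) (auto intro!: integral_mono int1' int2')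
  next
    case False
    define b where "b = sqrt (\<sigma>1\<^sup>2 - \<sigma>2\<^sup>2)"
    have b_pos: "b > 0" and b_sq: "b\<^sup>2 = \<sigma>1\<^sup>2 - \<sigma>2\<^sup>2"
      using False \<open>\<sigma>2 \<le> \<sigma>1\<close> \<sigma>2 by (auto simp: b_def power_strict_mono power_mono)
    interpret P: pair_prob_space G G by unfold_locales
    define F where "F = (\<lambda>p. g (exp (m1 + \<sigma>2 * fst p + b * snd p)))"
    have [measurable]: "F \<in> borel_measurable (G \<Otimes>\<^sub>M G)" unfolding F_def by measurable
    have "lognormal_measure m1 \<sigma>1 = distr (G \<Otimes>\<^sub>M G) borel (\<lambda>p. exp (m1 + \<sigma>2 * fst p + b * snd p))"
    proof -
      have "sqrt (\<sigma>2\<^sup>2 + b\<^sup>2) = \<sigma>1" using b_sq \<sigma>1 by simp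
      then have "distr (G \<Otimes>\<^sub>M G) lborel (\<lambda>p. m1 + \<sigma>2 * fst p + b * snd p) = normal_measure m1 \<sigma>1"
        using distr_std_normal_pair_affine[OF \<sigma>2 b_pos, of m1] by (simp add: G_def)
      then show ?thesis by (subst (asm) eq_commute) (simp add: distr_distr comp_def)
    qed
    then have int_F: "integrable (G \<Otimes>\<^sub>M G) F"
      and I1: "integral\<^sup>L (lognormal_measure m1 \<sigma>1) g = integral\<^sup>L (G \<Otimes>\<^sub>M G) F"
      using int1 unfolding F_def by (auto simp: integrable_distr_eq integral_distr)
    have jensen: "(\<integral>w. F (z, w) \<partial>G) \<le> g (exp (m2 + \<sigma>2 * z))"
      if "integrable G (\<lambda>w. F (z, w))" for z
    proof -
      have "(\<integral>w. F (z, w) \<partial>G) \<le> g (exp (m1 + \<sigma>2 * z + b\<^sup>2 / 2))"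
        using integral_concave_exp_std_normal_le[OF g_concave, of "m1 + \<sigma>2 * z" b] that
        by (simp add: F_def G_def)
      also have "\<dots> \<le> g (exp (m2 + \<sigma>2 * z))"
        using mean b_sq by (intro mono_onD[OF g_mono]) (auto simp: diff_divide_distrib)
      finally show ?thesis .
    qed
    have "integral\<^sup>L (G \<Otimes>\<^sub>M G) F = (\<integral>z. (\<integral>w. F (z, w) \<partial>G) \<partial>G)"
      by (rule P.integral_fst'[OF int_F, symmetric])
    also have "\<dots> \<le> (\<integral>z. g (exp (m2 + \<sigma>2 * z)) \<partial>G)"
      using P.AE_integrable_fst'[OF int_F] jensen
      by (intro integral_mono_AE P.integrable_fst'[OF int_F] int2') auto
    finally show ?thesis using I1 I2 by simp
  qed
qed

lemma ennreal_divide_one [simp]: "x / (1::ennreal) = x"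
  by (simp add: divide_ennreal_def)

abbreviation uniform_01 :: "real measure" where
  "uniform_01 \<equiv> uniform_measure lborel {0<..<1}"

lemma emeasure_uniform_01: "A \<in> sets borel \<Longrightarrow> emeasure uniform_01 A = emeasure lborel ({0<..<1} \<inter> A)"
  by simp

lemma real_distribution_uniform_01: "real_distribution uniform_01"
  unfolding real_distribution_def real_distribution_axioms_def
  by (auto intro!: prob_space_uniform_measure)

lemma cdf_uniform_01: "cdf uniform_01 t = max 0 (min 1 t)"
proof -
  consider "t < 0" | "0 \<le> t" "t < 1" | "1 \<le> t" by linarith
  then have "{0<..<1} \<inter> {..t} = (if t < 0 then {} else if t < 1 then {0<..t} else {0<..<1})"
    by cases auto
  then show ?thesis
    unfolding cdf_def measure_def by (simp add: emeasure_uniform_01)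
qed

context real_distribution
begin

lemma borel_measurable_cdf [measurable]: "cdf M \<in> borel_measurable borel"
  by (rule borel_measurable_mono) (simp add: mono_def cdf_nondecreasing)

lemma quantile_le_iff:
  assumes "0 < u" "u < 1"
  shows "quantile (cdf M) u \<le> x \<longleftrightarrow> u \<le> cdf M x"
proof -
  define S where "S = {x. u \<le> cdf M x}"
  obtain N where N: "\<And>x. x \<ge> N \<Longrightarrow> u < cdf M x"
    using order_tendstoD(1)[OF cdf_lim_at_top_prob assms(2)] by (auto simp: eventually_at_top_linorder)
  then have "S \<noteq> {}" by (auto simp: S_def intro!: exI[of _ N] less_imp_le)
  obtain L where L: "\<And>x. x \<le> L \<Longrightarrow> cdf M x < u"
    using order_tendstoD(2)[OF cdf_lim_at_bot assms(1)] by (auto simp: eventually_at_bot_linorder)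
  then have bdd: "bdd_below S" by (metis S_def bdd_belowI mem_Collect_eq not_le order_less_imp_le)
  have q: "quantile (cdf M) u = Inf S" by (simp add: quantile_def S_def)
  show ?thesis
  proof
    assume "u \<le> cdf M x"
    then show "quantile (cdf M) u \<le> x" unfolding q by (intro cInf_lower[OF _ bdd]) (simp add: S_def)
  next
    assume qx: "quantile (cdf M) u \<le> x"
    have "u \<le> cdf M y" if "y > x" for y
    proof -
      have "Inf S < y" using qx that q by simp
      then obtain s where "s \<in> S" "s < y" using cInf_lessD[OF \<open>S \<noteq> {}\<close>] by blast
      then show ?thesis unfolding S_def using cdf_nondecreasing[of s y] by simp
    qed
    then have "eventually (\<lambda>y. u \<le> cdf M y) (at_right x)"
      by (simp add: eventually_at_filter)
    with cdf_is_right_cont[of x] show "u \<le> cdf M x"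
      by (intro tendsto_lowerbound[where F="at_right x"]) (auto simp: continuous_within)
  qed
qed

lemma quantile_mono:
  assumes "0 < u" "u \<le> v" "v < 1"
  shows "quantile (cdf M) u \<le> quantile (cdf M) v"
  using assms quantile_le_iff[of v "quantile (cdf M) v"] quantile_le_iff[of u "quantile (cdf M) v"] by simp

lemma quantile_nonneg:
  assumes "\<And>x. x < 0 \<Longrightarrow> cdf M x = 0" "0 < u" "u < 1"
  shows "0 \<le> quantile (cdf M) u"
  using assms quantile_le_iff[of u "quantile (cdf M) u"] by (metis not_le order.irrefl)

lemma borel_measurable_quantile [measurable]: "quantile (cdf M) \<in> borel_measurable borel"
proof (rule borel_measurable_piecewise_mono[of "{{..0}, {0<..<1}, {1}, {1<..}}"])
  fix c :: "real set" assume "c \<in> {{..0}, {0<..<1}, {1}, {1<..}}"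
  then consider "c = {..0}" | "c = {0<..<1}" | "c = {1}" | "c = {1<..}" by blast
  moreover have low: "quantile (cdf M) u = Inf UNIV" if "u \<le> 0" for u
    using that cdf_nonneg unfolding quantile_def by (metis UNIV_eq_I mem_Collect_eq order_trans)
  moreover have high: "quantile (cdf M) u = Inf {}" if "1 < u" for u
    using that cdf_bounded_prob unfolding quantile_def by (metis Collect_empty_eq le_less_trans not_le)
  ultimately show "mono_on c (quantile (cdf M))"
  proof cases
    case 1
    then show ?thesis by (intro mono_onI) (metis atMost_iff low order_refl)
  next
    case 4
    then show ?thesis by (intro mono_onI) (metis greaterThan_iff high le_less_trans order_refl)
  qed (auto intro!: mono_onI quantile_mono)
qed auto

lemma distr_uniform_01_quantile: "distr uniform_01 borel (quantile (cdf M)) = M"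
proof (rule cdf_unique)
  show "real_distribution (distr uniform_01 borel (quantile (cdf M)))"
    by (rule prob_space.real_distribution_distr) (use real_distribution_uniform_01 in \<open>auto simp: real_distribution_def\<close>)
  have "cdf (distr uniform_01 borel (quantile (cdf M))) x = cdf M x" for x
  proof -
    have "{0<..<1} \<inter> quantile (cdf M) -` {..x} = {0<..<1} \<inter> {..cdf M x}"
      using quantile_le_iff by auto
    moreover have "quantile (cdf M) -` {..x} \<in> sets borel"
      using measurable_sets[OF borel_measurable_quantile atMost_borel] by simp
    ultimately have "measure uniform_01 (quantile (cdf M) -` {..x}) = measure uniform_01 {..cdf M x}"
      by (simp add: measure_def emeasure_uniform_01)
    moreover have "measure uniform_01 {..cdf M x} = cdf M x"
      using cdf_uniform_01[of "cdf M x"] cdf_nonneg[of x] cdf_bounded_prob[of x] by (simp add: cdf_def2)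
    moreover have "quantile (cdf M) \<in> measurable uniform_01 borel"
      using borel_measurable_quantile by (subst measurable_cong_sets[of _ borel _ borel]) auto
    ultimately show ?thesis
      unfolding cdf_def2[of "distr _ _ _"] by (subst measure_distr) auto
  qed
  then show "cdf (distr uniform_01 borel (quantile (cdf M))) = cdf M" ..
qed (rule real_distribution_axioms)

lemma measure_cdf_less:
  assumes "continuous_on UNIV (cdf M)" "0 < u" "u < 1"
  shows "measure M {x. cdf M x < u} = u"
proof -
  define q where "q = quantile (cdf M) u"
  have "{x. cdf M x < u} = {..<q}"
    by (rule set_eqI) (metis lessThan_iff mem_Collect_eq not_le q_def quantile_le_iff[OF assms(2,3)])
  moreover have "measure M {..<q} = cdf M q"
  proof -
    have "measure M {q} = 0" using assms(1) by (simp add: isCont_cdf[symmetric] continuous_on_eq_continuous_at)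
    then show ?thesis
      unfolding cdf_def ivl_disj_un(2)[symmetric] by (subst finite_measure_Union) auto
  qed
  moreover have "cdf M q = u"
  proof (rule antisym)
    have "cdf M y \<le> u" if "y < q" for y
      using quantile_le_iff[OF assms(2,3), of y] that by (simp add: q_def)
    then have "\<forall>\<^sub>F y in at_left q. cdf M y \<le> u" by (simp add: eventually_at_filter)
    moreover have "(cdf M \<longlongrightarrow> cdf M q) (at_left q)"
      using assms(1) by (simp add: continuous_on_eq_continuous_within continuous_within filterlim_at_split)
    ultimately show "cdf M q \<le> u" by (intro tendsto_upperbound) auto
  qed (use quantile_le_iff[OF assms(2,3), of q] in \<open>simp add: q_def\<close>)
  ultimately show ?thesis by simp
qed

lemma measure_cdf_le:
  assumes cont: "continuous_on UNIV (cdf M)"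
  shows "measure M {x. cdf M x \<le> t} = max 0 (min 1 t)"
proof -
  consider "t < 0" | "0 \<le> t" "t < 1" | "1 \<le> t" by linarith
  then show ?thesis
  proof cases
    case 1
    then have "{x. cdf M x \<le> t} = {}" using cdf_nonneg by (auto simp: not_le intro: less_le_trans)
    then show ?thesis using 1 by simp
  next
    case 2
    have "measure M {x. cdf M x \<le> t} \<le> t"
    proof (rule dense_ge_bounded[OF \<open>t < 1\<close>])
      fix s assume "t < s" "s < 1"
      then have "measure M {x. cdf M x \<le> t} \<le> measure M {x. cdf M x < s}"
        by (intro finite_measure_mono) auto
      then show "measure M {x. cdf M x \<le> t} \<le> s"
        using measure_cdf_less[OF cont _ \<open>s < 1\<close>] \<open>t < s\<close> 2 by simp
    qed
    moreover have "t \<le> measure M {x. cdf M x \<le> t}"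
    proof (cases "t = 0")
      case False
      then have "measure M {x. cdf M x < t} \<le> measure M {x. cdf M x \<le> t}"
        by (intro finite_measure_mono) auto
      then show ?thesis using measure_cdf_less[OF cont _ \<open>t < 1\<close>] False 2 by simp
    qed simp
    ultimately show ?thesis using 2 by simp
  next
    case 3
    then have "{x. cdf M x \<le> t} = space M" using cdf_bounded_prob by (auto intro: order_trans)
    then show ?thesis using 3 prob_space by simp
  qed
qed

lemma distr_cdf_uniform_01:
  assumes cont: "continuous_on UNIV (cdf M)"
  shows "distr M borel (cdf M) = uniform_01"
proof (rule cdf_unique)
  have cdf_measurable: "cdf M \<in> borel_measurable M" by measurable
  show "real_distribution (distr M borel (cdf M))" by (rule real_distribution_distr) simp
  show "real_distribution uniform_01" by (rule real_distribution_uniform_01)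
  have "cdf (distr M borel (cdf M)) t = measure M {x. cdf M x \<le> t}" for t
    unfolding cdf_def2[of "distr _ _ _"] by (subst measure_distr[OF cdf_measurable]) (auto simp: vimage_def)
  then show "cdf (distr M borel (cdf M)) = cdf uniform_01"
    by (simp add: fun_eq_iff cdf_uniform_01 measure_cdf_le[OF cont])
qed

end

lemma concave_on_cong:
  fixes f g :: "real \<Rightarrow> real"
  assumes "concave_on A f" "\<And>x. x \<in> A \<Longrightarrow> f x = g x"
  shows "concave_on A g"
proof -
  have "convex A" using assms(1) by (rule concave_on_imp_convex)
  show ?thesis unfolding concave_on_iff
  proof (intro conjI ballI allI impI)
    fix x y u v :: real assume xyuv: "x \<in> A" "y \<in> A" "0 \<le> u" "0 \<le> v" "u + v = 1"
    then have "u * f x + v * f y \<le> f (u *\<^sub>R x + v *\<^sub>R y)"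
      using assms(1) unfolding concave_on_iff by blast
    moreover have "u *\<^sub>R x + v *\<^sub>R y \<in> A" using xyuv by (intro convexD[OF \<open>convex A\<close>])
    ultimately show "u * g x + v * g y \<le> g (u *\<^sub>R x + v *\<^sub>R y)"
      using assms(2) xyuv by simp
  qed fact
qed

lemma concave_on_compose_mono:
  fixes f g :: "real \<Rightarrow> real"
  assumes "concave_on A f" "mono_on A f" "concave_on B g" "g ` B \<subseteq> A"
  shows "concave_on B (\<lambda>x. f (g x))"
  unfolding concave_on_iff
proof (intro conjI ballI allI impI)
  show "convex B" using assms(3) by (rule concave_on_imp_convex)
  fix x y u v :: real assume xy: "x \<in> B" "y \<in> B" and uv: "0 \<le> u" "0 \<le> v" "u + v = 1"
  have gxy: "g x \<in> A" "g y \<in> A" using assms(4) xy by auto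
  have "u * f (g x) + v * f (g y) \<le> f (u * g x + v * g y)"
    using assms(1) gxy uv unfolding concave_on_iff by simp
  also have "\<dots> \<le> f (g (u * x + v * y))"
  proof (rule mono_onD[OF assms(2)])
    show "u * g x + v * g y \<in> A"
      using convexD[OF concave_on_imp_convex[OF assms(1)] gxy uv] by simp
    show "g (u * x + v * y) \<in> A"
      using assms(4) convexD[OF concave_on_imp_convex[OF assms(3)] xy uv] by auto
    show "u * g x + v * g y \<le> g (u * x + v * y)"
      using assms(3) xy uv unfolding concave_on_iff by simp
  qed
  finally show "u * f (g x) + v * f (g y) \<le> f (g (u *\<^sub>R x + v *\<^sub>R y))" by simp
qed

lemma concave_on_powr:
  assumes "0 < a" "a \<le> 1"
  shows "concave_on {0<..} (\<lambda>x::real. x powr a)"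
proof (rule f''_le0_imp_concave[where f'="\<lambda>x. a * x powr (a - 1)" and f''="\<lambda>x. a * ((a - 1) * x powr (a - 1 - 1))"])
  fix x :: real assume "x \<in> {0<..}"
  then show "((\<lambda>x. x powr a) has_real_derivative a * x powr (a - 1)) (at x)"
    and "((\<lambda>x. a * x powr (a - 1)) has_real_derivative a * ((a - 1) * x powr (a - 1 - 1))) (at x)"
    by (auto intro!: derivative_eq_intros)
  show "a * ((a - 1) * x powr (a - 1 - 1)) \<le> 0"
    using assms by (intro mult_nonneg_nonpos mult_nonpos_nonneg) auto
qed simp

lemma concave_on_min_const: "concave_on {0..} (\<lambda>x::real. min x c)"
proof (rule concave_on_linorderI)
  fix t x y :: real assume "0 < t" "t < 1"
  then have "(1 - t) * min x c + t * min y c \<le> (1 - t) * x + t * y"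
    and "(1 - t) * min x c + t * min y c \<le> (1 - t) * c + t * c"
    by (intro add_mono mult_left_mono; simp)+
  then show "(1 - t) * min x c + t * min y c \<le> min ((1 - t) *\<^sub>R x + t *\<^sub>R y) c"
    by (simp add: algebra_simps)
qed simp

lemma borel_measurable_indicator_F_SSD:
  assumes "f \<in> F_SSD"
  shows "(\<lambda>x. indicator {0..} x *\<^sub>R f x :: real) \<in> borel_measurable borel"
proof (rule borel_measurable_piecewise_mono[of "{{..<0}, {0..}}"])
  fix c :: "real set" assume "c \<in> {{..<0}, {0..}}"
  then consider "c = {..<0}" | "c = {0..}" by blast
  then show "mono_on c (\<lambda>x. indicator {0..} x *\<^sub>R f x)"
    by cases (use assms in \<open>auto simp: F_SSD_def mono_on_def\<close>)
qed auto

text \<open>Functions in \<open>F_SSD\<close> only matter on \<open>[0, \<infinity>)\<close>; composed with a non-negative monotone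
  concave \<open>h\<close> they become test functions of the increasing concave order.\<close>
lemma preceq_F_SSD_distr:
  assumes "icv_le P1 P2" and [measurable_cong]: "sets P1 = sets borel" "sets P2 = sets borel"
    and [measurable]: "h \<in> borel_measurable borel"
    and h: "mono_on {0<..} h" "concave_on {0<..} h" "\<And>x. x > 0 \<Longrightarrow> 0 \<le> h x"
  shows "preceq F_SSD (distr P1 borel h) (distr P2 borel h)"
  unfolding preceq_def
proof (intro ballI impI, elim conjE)
  fix f assume f: "f \<in> F_SSD"
  define f0 where "f0 = (\<lambda>x. indicator {0..} x *\<^sub>R f x :: real)"
  have [measurable]: "f0 \<in> borel_measurable borel"
    unfolding f0_def by (rule borel_measurable_indicator_F_SSD[OF f])
  have f_mono: "mono_on {0..} f" and f_concave: "concave_on {0..} f" using f by (auto simp: F_SSD_def)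
  define g where "g = (\<lambda>x. f0 (h x))"
  have g_eq: "g x = f (h x)" if "x > 0" for x using h(3)[OF that] by (simp add: g_def f0_def)
  have [measurable]: "g \<in> borel_measurable borel" unfolding g_def by measurable
  have g_mono: "mono_on {0<..} g"
    by (rule mono_onI) (auto simp: g_eq intro!: mono_onD[OF f_mono] mono_onD[OF h(1)] h(3))
  have "concave_on {0<..} (\<lambda>x. f (h x))"
    using h(3) by (intro concave_on_compose_mono[OF f_concave f_mono h(2)]) auto
  then have g_concave: "concave_on {0<..} g" by (rule concave_on_cong) (simp add: g_eq)
  have transfer: "integral\<^sup>L P g = (LINT x:{0..}|distr P borel h. f x) \<and>
      (integrable P g \<longleftrightarrow> set_integrable (distr P borel h) {0..} f)"
    if [measurable_cong]: "sets P = sets borel" for P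
    unfolding set_lebesgue_integral_def set_integrable_def f0_def[symmetric] g_def
    by (subst integral_distr, simp_all, subst integrable_distr_eq, simp_all)
  assume "set_integrable (distr P1 borel h) {0..} f" "set_integrable (distr P2 borel h) {0..} f"
  then show "(LINT x:{0..}|distr P1 borel h. f x) \<le> (LINT x:{0..}|distr P2 borel h. f x)"
    using icv_leD[OF assms(1) _ g_mono g_concave] transfer[OF assms(2)] transfer[OF assms(3)] by simp
qed

definition truncated_nn_integral :: "real measure \<Rightarrow> (real \<Rightarrow> real) \<Rightarrow> real \<Rightarrow> ennreal" where
  "truncated_nn_integral M Y b = (\<integral>\<^sup>+x. ennreal (Y x) * indicator {..<b} x \<partial>M)"

lemma truncated_nn_integral_mono:
  "b1 \<le> b2 \<Longrightarrow> truncated_nn_integral M Y b1 \<le> truncated_nn_integral M Y b2"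
  unfolding truncated_nn_integral_def
  by (intro nn_integral_mono mult_left_mono) (auto split: split_indicator)

lemma truncated_nn_integral_nonpos:
  "AE x in M. 0 < x \<Longrightarrow> b \<le> 0 \<Longrightarrow> truncated_nn_integral M Y b = 0"
  unfolding truncated_nn_integral_def
  by (subst nn_integral_cong_AE[where v="\<lambda>_. 0"]) (auto elim!: eventually_mono split: split_indicator)

lemma truncated_nn_integral_left_continuous:
  assumes [measurable_cong]: "sets M = sets borel" and [measurable]: "Y \<in> borel_measurable borel"
  shows "truncated_nn_integral M Y b = (SUP n. truncated_nn_integral M Y (b - 1 / Suc n))"
proof -
  have ind: "(SUP n. indicator {..< b - 1 / Suc n} x :: ennreal) = indicator {..<b} x" for x
  proof (cases "x < b")
    case True
    then obtain n where "1 / Suc n < b - x" using reals_Archimedean[of "b - x"] by (auto simp: inverse_eq_divide)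
    then have "(1::ennreal) \<le> (SUP n. indicator {..< b - 1 / Suc n} x)"
      by (intro SUP_upper2[of n]) auto
    then show ?thesis using True by (auto intro!: antisym SUP_least split: split_indicator)
  next
    case False
    then have "\<not> x < b - 1 / Suc n" for n by (smt (verit) divide_nonneg_nonneg of_nat_0_le_iff)
    then show ?thesis using False by simp
  qed
  have shrink: "{..< b - 1 / Suc m} \<subseteq> {..< b - 1 / Suc n}" if "m \<le> n" for m n
  proof -
    have "1 / real (Suc n) \<le> 1 / Suc m" using that by (simp add: frac_le)
    then show ?thesis by auto
  qed
  have "incseq (\<lambda>n x. ennreal (Y x) * indicator {..< b - 1 / real (Suc n)} x)"
  proof (intro incseq_def[THEN iffD2] allI impI le_funI)
    fix m n :: nat and x assume "m \<le> n"
    then have "indicator {..< b - 1 / Suc m} x \<le> (indicator {..< b - 1 / Suc n} x :: ennreal)"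
      by (intro indicator_leI subsetD[OF shrink[OF \<open>m \<le> n\<close>]])
    then show "ennreal (Y x) * indicator {..< b - 1 / Suc m} x \<le> ennreal (Y x) * indicator {..< b - 1 / Suc n} x"
      by (rule mult_left_mono) simp
  qed
  have "truncated_nn_integral M Y b = (\<integral>\<^sup>+x. (SUP n. ennreal (Y x) * indicator {..< b - 1 / Suc n} x) \<partial>M)"
    unfolding truncated_nn_integral_def by (intro nn_integral_cong) (metis SUP_mult_left_ennreal UNIV_not_empty ind)
  also have "\<dots> = (SUP n. truncated_nn_integral M Y (b - 1 / Suc n))"
    unfolding truncated_nn_integral_def using \<open>incseq _\<close> by (rule nn_integral_monotone_convergence_SUP) measurable
  finally show ?thesis .
qed

text \<open>Truncated integrals over the half-lines \<open>(-\<infinity>, b)\<close> determine a non-negative function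
  almost everywhere, since these half-lines generate the Borel sets.\<close>
lemma AE_eq_of_truncated_nn_integral_eq:
  assumes "real_distribution M"
    and [measurable]: "Y1 \<in> borel_measurable borel" "Y2 \<in> borel_measurable borel"
    and eq: "\<And>b. truncated_nn_integral M Y1 b = truncated_nn_integral M Y2 b"
    and finite: "\<And>b. truncated_nn_integral M Y2 b < \<infinity>"
  shows "AE x in M. ennreal (Y1 x) = ennreal (Y2 x)"
proof -
  interpret real_distribution M by (rule assms(1))
  have sets_Iio: "sets (borel :: real measure) = sigma_sets UNIV (range lessThan)"
    by (subst borel_Iio) (simp add: sets_measure_of)
  have emeasure_Iio: "emeasure (density M (\<lambda>x. ennreal (Y x))) {..<b} = truncated_nn_integral M Y b"
    if [measurable]: "Y \<in> borel_measurable borel" for Y b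
    by (simp add: emeasure_density truncated_nn_integral_def)
  have "density M (\<lambda>x. ennreal (Y1 x)) = density M (\<lambda>x. ennreal (Y2 x))"
  proof (rule measure_eqI_generator_eq[where \<Omega>=UNIV and E="range lessThan" and A="\<lambda>i. {..<real i}"])
    show "Int_stable (range (lessThan :: real \<Rightarrow> real set))"
      by (auto simp: Int_stable_def greaterThan_Int_greaterThan)
    show "(\<Union>i. {..<real i}) = UNIV" by (auto intro: reals_Archimedean2)
    show "emeasure (density M (\<lambda>x. ennreal (Y1 x))) {..<real i} \<noteq> \<infinity>" for i
      using finite[of "real i"] by (simp add: emeasure_Iio eq)
  qed (use sets_Iio in \<open>auto simp: emeasure_Iio eq\<close>)
  then show ?thesis by (subst (asm) density_unique_iff) auto
qed

lemma nn_integral_min_le_of_preceq: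
  assumes "prob_space P" and [measurable_cong]: "sets P = sets borel" and pos: "AE x in P. 0 < x"
    and [measurable]: "Y1 \<in> borel_measurable borel" "Y2 \<in> borel_measurable borel"
    and nonneg: "\<And>x. 0 < x \<Longrightarrow> 0 \<le> Y1 x" "\<And>x. 0 < x \<Longrightarrow> 0 \<le> Y2 x"
    and preceq: "preceq F_SSD (distr P borel Y1) (distr P borel Y2)" and "0 \<le> c"
  shows "(\<integral>\<^sup>+x. ennreal (min (Y1 x) c) \<partial>P) \<le> (\<integral>\<^sup>+x. ennreal (min (Y2 x) c) \<partial>P)"
proof -
  interpret prob_space P by (rule assms(1))
  have min_integral: "(\<integral>\<^sup>+x. ennreal (min (Y x) c) \<partial>P) = ennreal (LINT y:{0..}|distr P borel Y. min y c)"
    if [measurable]: "Y \<in> borel_measurable borel" and Y_nonneg: "\<And>x. 0 < x \<Longrightarrow> 0 \<le> Y x" for Y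
  proof -
    have "(LINT y:{0..}|distr P borel Y. min y c) = (\<integral>x. indicator {0..} (Y x) * min (Y x) c \<partial>P)"
      unfolding set_lebesgue_integral_def by (subst integral_distr) auto
    also have "\<dots> = (\<integral>x. min (Y x) c \<partial>P)"
      using pos Y_nonneg by (intro integral_cong_AE) (auto elim!: eventually_mono)
    finally show ?thesis
      using pos Y_nonneg \<open>0 \<le> c\<close>
      by (subst nn_integral_eq_integral) (auto intro!: integrable_const_bound[where B=c] elim!: eventually_mono)
  qed
  have integrable_min: "set_integrable (distr P borel Y) {0..} (\<lambda>y. min y c)"
    if [measurable]: "Y \<in> borel_measurable borel" for Y
  proof -
    interpret D: prob_space "distr P borel Y" by (rule prob_space_distr) simp
    show ?thesis unfolding set_integrable_def
      using \<open>0 \<le> c\<close> by (intro D.integrable_const_bound[where B=c]) (auto split: split_indicator)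
  qed
  have "(\<lambda>y. min y c) \<in> F_SSD"
    unfolding F_SSD_def by (auto intro!: mono_onI concave_on_min_const)
  then have "(LINT y:{0..}|distr P borel Y1. min y c) \<le> (LINT y:{0..}|distr P borel Y2. min y c)"
    using preceq integrable_min unfolding preceq_def by simp
  then show ?thesis
    by (metis min_integral[OF assms(4) nonneg(1)] min_integral[OF assms(5) nonneg(2)] ennreal_leI)
qed

text \<open>If \<open>Xs\<close> is non-decreasing, \<open>min (Xs x) (Xs b)\<close> splits into the truncated part of \<open>Xs\<close> below \<open>b\<close>
  and a constant above \<open>b\<close>; comparing with \<open>min (X x) (Xs b)\<close>, which is the test function
  \<open>\<lambda>y. min y (Xs b)\<close> of \<open>F_SSD\<close>, gives the inequality.\<close>
lemma truncated_nn_integral_le_of_preceq: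
  assumes "prob_space P" and [measurable_cong]: "sets P = sets borel" and pos: "AE x in P. 0 < x"
    and Xs_meas [measurable]: "Xs \<in> borel_measurable borel"
    and X_meas [measurable]: "X \<in> borel_measurable borel"
    and nonneg: "\<And>x. 0 < x \<Longrightarrow> 0 \<le> Xs x" "\<And>x. 0 < x \<Longrightarrow> 0 \<le> X x"
    and mono: "mono_on {0<..} Xs"
    and preceq: "preceq F_SSD (distr P borel Xs) (distr P borel X)"
  shows "truncated_nn_integral P Xs b \<le> truncated_nn_integral P X b"
proof (cases "b \<le> 0")
  case True
  then show ?thesis using truncated_nn_integral_nonpos[OF pos] by simp
next
  case False
  interpret prob_space P by (rule assms(1))
  define c where "c = Xs b"
  have "0 \<le> c" using nonneg False by (simp add: c_def)
  define upper where "upper = (\<lambda>Y x. ennreal (Y x) * indicator {..<b} x + ennreal c * indicator {b..} x)"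
  have integral_upper: "integral\<^sup>N P (upper Y) =
      truncated_nn_integral P Y b + (\<integral>\<^sup>+x. ennreal c * indicator {b..} x \<partial>P)"
    if [measurable]: "Y \<in> borel_measurable borel" for Y
    unfolding upper_def truncated_nn_integral_def by (rule nn_integral_add) measurable
  have "AE x in P. ennreal (min (Xs x) c) = upper Xs x"
    using pos by eventually_elim (use mono False in \<open>auto simp: upper_def c_def mono_on_def split: split_indicator\<close>)
  then have "integral\<^sup>N P (upper Xs) \<le> (\<integral>\<^sup>+x. ennreal (min (X x) c) \<partial>P)"
    using nn_integral_min_le_of_preceq[OF assms(1-5) nonneg preceq \<open>0 \<le> c\<close>] by (simp add: nn_integral_cong_AE)
  also have "\<dots> \<le> integral\<^sup>N P (upper X)"
    using pos by (intro nn_integral_mono_AE) (auto elim!: eventually_mono intro: ennreal_leI simp: upper_def split: split_indicator)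
  finally have "truncated_nn_integral P Xs b + (\<integral>\<^sup>+x. ennreal c * indicator {b..} x \<partial>P) \<le>
      truncated_nn_integral P X b + (\<integral>\<^sup>+x. ennreal c * indicator {b..} x \<partial>P)"
    by (simp only: integral_upper Xs_meas X_meas)
  moreover have "(\<integral>\<^sup>+x. ennreal c * indicator {b..} x \<partial>P) < \<infinity>"
    by (subst nn_integral_cmult_indicator) (auto simp: ennreal_mult_eq_top_iff less_top[symmetric])
  ultimately show ?thesis
    by (subst (asm) (1 2) add.commute) (auto simp: ennreal_add_left_cancel_le)
qed

lemma nn_integral_layer_cake:
  assumes "sigma_finite_measure M"
    and [measurable]: "Y \<in> borel_measurable M" "Z \<in> borel_measurable M"
  shows "(\<integral>\<^sup>+x. ennreal (Z x) * Y x \<partial>M) = (\<integral>\<^sup>+t. indicator {0<..} t * (\<integral>\<^sup>+x. Y x * indicator {x. t < Z x} x \<partial>M) \<partial>lborel)"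
    and "(\<lambda>t. indicator {0<..} t * (\<integral>\<^sup>+x. Y x * indicator {x. t < Z x} x \<partial>M)) \<in> borel_measurable lborel"
proof -
  interpret pair_sigma_finite M lborel
    by (intro pair_sigma_finite.intro assms(1) lborel.sigma_finite_measure_axioms)
  define G where "G = (\<lambda>x t. if 0 < t \<and> t < Z x then Y x else 0)"
  have G_measurable: "(\<lambda>(x, t). G x t) \<in> borel_measurable (M \<Otimes>\<^sub>M lborel)"
    unfolding G_def split_beta' by measurable
  have inner_t: "(\<integral>\<^sup>+t. G x t \<partial>lborel) = ennreal (Z x) * Y x" for x
  proof -
    have "(\<integral>\<^sup>+t. G x t \<partial>lborel) = Y x * emeasure lborel {0<..<Z x}"
      unfolding G_def by (subst nn_integral_cmult_indicator[symmetric]) (auto intro!: nn_integral_cong)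
    then show ?thesis by (cases "0 \<le> Z x") (auto simp: ennreal_neg mult.commute)
  qed
  have inner_x: "(\<integral>\<^sup>+x. G x t \<partial>M) = indicator {0<..} t * (\<integral>\<^sup>+x. Y x * indicator {x. t < Z x} x \<partial>M)" for t
    unfolding G_def by (subst nn_integral_cmult[symmetric]) (auto intro!: nn_integral_cong split: split_indicator)
  show "(\<integral>\<^sup>+x. ennreal (Z x) * Y x \<partial>M) = (\<integral>\<^sup>+t. indicator {0<..} t * (\<integral>\<^sup>+x. Y x * indicator {x. t < Z x} x \<partial>M) \<partial>lborel)"
    using Fubini'[OF G_measurable] by (simp add: inner_t inner_x)
  show "(\<lambda>t. indicator {0<..} t * (\<integral>\<^sup>+x. Y x * indicator {x. t < Z x} x \<partial>M)) \<in> borel_measurable lborel"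
    using sigma_finite_measure.borel_measurable_nn_integral[OF assms(1), of "\<lambda>t x. G x t" lborel]
    unfolding inner_x[symmetric] G_def by measurable
qed

lemma abs_mult_le_sum_squares: "\<bar>(a::real) * b\<bar> \<le> a\<^sup>2 + b\<^sup>2"
proof -
  have "2 * (\<bar>a\<bar> * \<bar>b\<bar>) \<le> a\<^sup>2 + b\<^sup>2"
    using zero_le_power2[of "\<bar>a\<bar> - \<bar>b\<bar>"] by (simp add: power2_diff)
  moreover have "0 \<le> \<bar>a\<bar> * \<bar>b\<bar>" by simp
  ultimately show ?thesis unfolding abs_mult by linarith
qed

lemma less_inverse_powr_iff:
  fixes t x C a :: real
  assumes "0 < t" "0 < x" "0 < C" "0 < a"
  shows "t < 1 / (C * x powr a) \<longleftrightarrow> x < (1 / (C * t)) powr (1 / a)"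
proof -
  have "t < 1 / (C * x powr a) \<longleftrightarrow> x powr a < 1 / (C * t)"
    using assms by (simp add: field_simps)
  also have "\<dots> \<longleftrightarrow> (x powr a) powr (1 / a) < (1 / (C * t)) powr (1 / a)"
    using assms powr_less_mono2[of "1 / a" "x powr a" "1 / (C * t)"]
      powr_less_cancel2[of "1 / a" "x powr a" "1 / (C * t)"] by auto
  finally show ?thesis using assms by (simp add: powr_powr)
qed

lemma cdf_distr_strict_mono:
  assumes "real_distribution P" "AE x in P. 0 < x"
    and [measurable]: "l \<in> borel_measurable borel" and "strict_mono_on {0<..} l" "0 < x"
  shows "cdf (distr P borel l) (l x) = cdf P x"
proof -
  interpret real_distribution P by fact
  have "cdf (distr P borel l) (l x) = measure P (l -` {..l x})"
    unfolding cdf_def by (subst measure_distr) auto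
  also have "\<dots> = measure P {..x}"
  proof (rule measure_eq_AE)
    show "AE y in P. (y \<in> l -` {..l x}) = (y \<in> {..x})"
      using assms(2) by eventually_elim (simp add: strict_mono_on_less_eq[OF assms(4)] \<open>0 < x\<close>)
  qed (use measurable_sets[OF assms(3) atMost_borel] in auto)
  finally show ?thesis by (simp add: cdf_def)
qed

lemma AE_lborel_obtain_in_interval:
  fixes u v :: real
  assumes "AE t in lborel. P t" "u < v"
  obtains t where "u < t" "t < v" "P t"
proof -
  obtain N where N: "{t. \<not> P t} \<subseteq> N" "emeasure lborel N = 0" "N \<in> sets lborel"
    using AE_E[OF assms(1)] by auto
  have "\<not> {u<..<v} \<subseteq> N"
    using emeasure_mono[of "{u<..<v}" N lborel] N(2,3) assms(2) by auto
  then obtain t where "u < t" "t < v" "t \<notin> N" by (meson greaterThanLessThan_iff subsetI)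
  then show ?thesis using N(1) that by blast
qed

text \<open>A reparametrised family of truncated integrals that agree for almost every parameter agrees
  everywhere, as truncated integrals are monotone and left-continuous in the truncation point.\<close>
lemma truncated_nn_integral_eq_of_AE:
  fixes g :: "real \<Rightarrow> real"
  assumes [measurable_cong]: "sets M = sets borel" and pos: "AE x in M. 0 < x"
    and [measurable]: "Y1 \<in> borel_measurable borel"
    and le: "\<And>b. truncated_nn_integral M Y2 b \<le> truncated_nn_integral M Y1 b"
    and AE_eq: "AE t in lborel. 0 < t \<longrightarrow> truncated_nn_integral M Y1 (g t) = truncated_nn_integral M Y2 (g t)"
    and g: "\<And>\<beta> b. 0 < \<beta> \<Longrightarrow> \<beta> < b \<Longrightarrow> \<exists>u v. 0 \<le> u \<and> u < v \<and> (\<forall>t\<in>{u<..<v}. \<beta> \<le> g t \<and> g t \<le> b)"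
  shows "truncated_nn_integral M Y1 b = truncated_nn_integral M Y2 b"
proof (rule antisym[OF _ le])
  have "truncated_nn_integral M Y1 \<beta> \<le> truncated_nn_integral M Y2 b" if "\<beta> < b" for \<beta>
  proof (cases "0 < \<beta>")
    case True
    obtain u v where uv: "0 \<le> u" "u < v" and g_uv: "\<And>t. t \<in> {u<..<v} \<Longrightarrow> \<beta> \<le> g t \<and> g t \<le> b"
      using g[OF True \<open>\<beta> < b\<close>] by blast
    obtain t where "u < t" "t < v" "0 < t \<longrightarrow> truncated_nn_integral M Y1 (g t) = truncated_nn_integral M Y2 (g t)"
      using AE_eq uv(2) by (rule AE_lborel_obtain_in_interval)
    then have "\<beta> \<le> g t" "g t \<le> b" and eq: "truncated_nn_integral M Y1 (g t) = truncated_nn_integral M Y2 (g t)"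
      using g_uv[of t] uv(1) by auto
    then show ?thesis
      using truncated_nn_integral_mono[of \<beta> "g t" M Y1] truncated_nn_integral_mono[of "g t" b M Y2] by simp
  qed (simp add: truncated_nn_integral_nonpos[OF pos])
  then show "truncated_nn_integral M Y1 b \<le> truncated_nn_integral M Y2 b"
    by (subst truncated_nn_integral_left_continuous[OF assms(1,3)]) (auto intro!: SUP_least)
qed

text \<open>\<open>P\<close> is the law of \<open>S_T\<close> under the candidate least favourable measure, and the
  pricing measure is \<open>Q = P / \<ell>\<close> with likelihood ratio \<open>\<ell> x = C x\<^sup>a\<close>.\<close>
locale cost_efficiency = real_distribution P for P :: "real measure" +
  fixes C a :: real
  assumes AE_pos: "AE x in P. 0 < x"
    and continuous_cdf: "continuous_on UNIV (cdf P)"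
    and cdf_strict: "\<And>x. 0 < x \<Longrightarrow> 0 < cdf P x \<and> cdf P x < 1"
    and C_pos: "0 < C" and a_pos: "0 < a" and a_le_1: "a \<le> 1"
    and inverse_lr_square_integrable: "integrable P (\<lambda>x. (1 / (C * x powr a))\<^sup>2)"
begin

abbreviation Q :: "real measure" where
  "Q \<equiv> density P (\<lambda>x. ennreal (1 / (C * x powr a)))"

text \<open>For \<open>t > 0\<close>, the level set \<open>{x > 0. t < 1 / (C x\<^sup>a)}\<close> is \<open>(0, threshold t)\<close>.\<close>
definition threshold :: "real \<Rightarrow> real" where
  "threshold t = (1 / (C * t)) powr (1 / a)"

lemma AE_Q_pos: "AE x in Q. 0 < x"
  using AE_pos by (subst AE_density) (auto elim: eventually_mono)

lemma nn_integral_Q_layer_cake: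
  assumes [measurable]: "Y \<in> borel_measurable borel"
  shows "(\<integral>\<^sup>+x. ennreal (Y x) \<partial>Q) =
      (\<integral>\<^sup>+t. indicator {0<..} t * truncated_nn_integral P Y (threshold t) \<partial>lborel)"
    and "(\<lambda>t. indicator {0<..} t * truncated_nn_integral P Y (threshold t)) \<in> borel_measurable lborel"
proof -
  have inner: "indicator {0<..} t * (\<integral>\<^sup>+x. ennreal (Y x) * indicator {x. t < 1 / (C * x powr a)} x \<partial>P) =
      indicator {0<..} t * truncated_nn_integral P Y (threshold t)" for t
  proof (cases "0 < t")
    case True
    have "AE x in P. ennreal (Y x) * indicator {x. t < 1 / (C * x powr a)} x = ennreal (Y x) * indicator {..<threshold t} x"
      using AE_pos by eventually_elim
        (simp add: less_inverse_powr_iff[OF True _ C_pos a_pos] threshold_def split: split_indicator)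
    then show ?thesis unfolding truncated_nn_integral_def by (simp add: nn_integral_cong_AE)
  qed simp
  have "(\<integral>\<^sup>+x. ennreal (Y x) \<partial>Q) = (\<integral>\<^sup>+x. ennreal (1 / (C * x powr a)) * ennreal (Y x) \<partial>P)"
    by (subst nn_integral_density) auto
  then show "(\<integral>\<^sup>+x. ennreal (Y x) \<partial>Q) =
      (\<integral>\<^sup>+t. indicator {0<..} t * truncated_nn_integral P Y (threshold t) \<partial>lborel)"
    using nn_integral_layer_cake(1)[OF sigma_finite_measure_axioms, of "\<lambda>x. ennreal (Y x)" "\<lambda>x. 1 / (C * x powr a)"]
    by (simp add: inner)
  show "(\<lambda>t. indicator {0<..} t * truncated_nn_integral P Y (threshold t)) \<in> borel_measurable lborel"
    using nn_integral_layer_cake(2)[OF sigma_finite_measure_axioms, of "\<lambda>x. ennreal (Y x)" "\<lambda>x. 1 / (C * x powr a)"]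
    by (simp add: inner)
qed

lemma threshold_between:
  assumes "0 < \<beta>" "\<beta> < b"
  shows "\<exists>u v. 0 \<le> u \<and> u < v \<and> (\<forall>t\<in>{u<..<v}. \<beta> \<le> threshold t \<and> threshold t \<le> b)"
proof (intro exI conjI ballI)
  show "0 \<le> 1 / (C * b powr a)" using C_pos by simp
  show "1 / (C * b powr a) < 1 / (C * \<beta> powr a)"
    using assms C_pos a_pos by (auto intro!: divide_strict_left_mono mult_pos_pos powr_less_mono2)
  fix t assume t: "t \<in> {1 / (C * b powr a)<..<1 / (C * \<beta> powr a)}"
  then have "0 < t" using C_pos assms by (auto intro: le_less_trans[rotated])
  then show "\<beta> \<le> threshold t" "threshold t \<le> b"
    using t less_inverse_powr_iff[OF \<open>0 < t\<close> _ C_pos a_pos, of \<beta>] less_inverse_powr_iff[OF \<open>0 < t\<close> _ C_pos a_pos, of b] assms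
    by (auto simp: threshold_def)
qed

definition X_star :: "real measure \<Rightarrow> real \<Rightarrow> real" where
  "X_star D0 x = quantile (cdf D0) (cdf P x)"

context
  fixes D0 :: "real measure" and Ps :: "real measure set"
  assumes D0: "real_distribution D0" and cdf_D0_neg: "\<And>x. x < 0 \<Longrightarrow> cdf D0 x = 0"
    and quantile_D0_square: "(\<integral>\<^sup>+u\<in>{0<..<1}. ennreal ((quantile (cdf D0) u)\<^sup>2) \<partial>lborel) < \<infinity>"
    and quantile_D0_concave:
      "concave_on {0<..} (\<lambda>y. quantile (cdf D0) (cdf (distr P borel (\<lambda>x. C * x powr a)) y))"
    and P_in_Ps: "P \<in> Ps"
    and Ps_icv: "\<And>P'. P' \<in> Ps \<Longrightarrow> sets P' = sets borel \<and> icv_le P P'"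
begin

lemmas borel_measurable_quantile_D0 [measurable] = real_distribution.borel_measurable_quantile[OF D0]

lemma borel_measurable_X_star [measurable]: "X_star D0 \<in> borel_measurable borel"
  unfolding X_star_def by measurable

lemma X_star_nonneg: "0 < x \<Longrightarrow> 0 \<le> X_star D0 x"
  unfolding X_star_def using cdf_strict by (intro real_distribution.quantile_nonneg[OF D0 cdf_D0_neg]) auto

lemma mono_on_X_star: "mono_on {0<..} (X_star D0)"
  unfolding X_star_def using cdf_strict
  by (intro mono_onI real_distribution.quantile_mono[OF D0] cdf_nondecreasing) (auto intro: less_le_trans)

lemma distr_X_star: "distr P borel (X_star D0) = D0"
proof -
  have "distr P borel (X_star D0) = distr (distr P borel (cdf P)) borel (quantile (cdf D0))"
    by (subst distr_distr) (auto simp: comp_def X_star_def[abs_def])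
  also have "\<dots> = D0"
    unfolding distr_cdf_uniform_01[OF continuous_cdf] by (rule real_distribution.distr_uniform_01_quantile[OF D0])
  finally show ?thesis .
qed

lemma integrable_X_star_square: "integrable P (\<lambda>x. (X_star D0 x)\<^sup>2)"
proof (rule integrableI_nonneg)
  have "(\<integral>\<^sup>+x. ennreal ((X_star D0 x)\<^sup>2) \<partial>P) = (\<integral>\<^sup>+u. ennreal ((quantile (cdf D0) u)\<^sup>2) \<partial>distr P borel (cdf P))"
    by (subst nn_integral_distr) (auto simp: X_star_def)
  also have "\<dots> = (\<integral>\<^sup>+u\<in>{0<..<1}. ennreal ((quantile (cdf D0) u)\<^sup>2) \<partial>lborel)"
    by (simp add: distr_cdf_uniform_01[OF continuous_cdf] nn_integral_uniform_measure)
  finally show "(\<integral>\<^sup>+x. ennreal ((X_star D0 x)\<^sup>2) \<partial>P) < \<infinity>" using quantile_D0_square by simp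
qed auto

lemma X_star_payoff: "X_star D0 \<in> payoffs Q"
proof -
  have "integrable P (\<lambda>x. 1 / (C * x powr a) * X_star D0 x)"
  proof (rule Bochner_Integration.integrable_bound)
    show "integrable P (\<lambda>x. (1 / (C * x powr a))\<^sup>2 + (X_star D0 x)\<^sup>2)"
      by (intro Bochner_Integration.integrable_add inverse_lr_square_integrable integrable_X_star_square)
    show "AE x in P. norm (1 / (C * x powr a) * X_star D0 x) \<le> norm ((1 / (C * x powr a))\<^sup>2 + (X_star D0 x)\<^sup>2)"
    proof (intro AE_I2)
      fix x
      have "\<bar>1 / (C * x powr a) * X_star D0 x\<bar> \<le> (1 / (C * x powr a))\<^sup>2 + (X_star D0 x)\<^sup>2"
        by (rule abs_mult_le_sum_squares)
      then show "norm (1 / (C * x powr a) * X_star D0 x) \<le> norm ((1 / (C * x powr a))\<^sup>2 + (X_star D0 x)\<^sup>2)"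
        by (simp only: real_norm_def)
    qed
  qed auto
  then have "integrable Q (X_star D0)"
    using C_pos by (subst integrable_density) auto
  then show ?thesis unfolding payoffs_def using X_star_nonneg by auto
qed

text \<open>On \<open>(0, \<infinity>)\<close>, \<open>X_star D0\<close> is the assumed concave non-decreasing function of the likelihood
  ratio \<open>C x\<^sup>a\<close>, which is itself concave because \<open>a \<le> 1\<close>.\<close>
lemma concave_on_X_star: "concave_on {0<..} (X_star D0)"
proof -
  define l where "l = (\<lambda>x::real. C * x powr a)"
  define h where "h = (\<lambda>y. quantile (cdf D0) (cdf (distr P borel l) y))"
  have l_strict: "strict_mono_on {0<..} l"
    unfolding l_def using C_pos a_pos by (auto intro!: strict_mono_onI powr_less_mono2)
  have l_inverse: "l ((y / C) powr (1 / a)) = y" "0 < (y / C) powr (1 / a)" if "0 < y" for y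
    unfolding l_def using that C_pos a_pos by (auto simp: powr_powr)
  have X_star_h: "X_star D0 x = h (l x)" if "0 < x" for x
    using cdf_distr_strict_mono[OF real_distribution_axioms AE_pos _ l_strict that]
    by (simp add: X_star_def h_def l_def)
  have h_mono: "mono_on {0<..} h"
  proof (rule mono_onI)
    fix u v :: real assume "u \<in> {0<..}" "v \<in> {0<..}" "u \<le> v"
    then obtain x y where xy: "0 < x" "0 < y" "u = l x" "v = l y"
      using l_inverse by (metis greaterThan_iff)
    then have "x \<le> y" using strict_mono_on_less_eq[OF l_strict, of x y] \<open>u \<le> v\<close> by simp
    then have "X_star D0 x \<le> X_star D0 y" using xy by (intro mono_onD[OF mono_on_X_star]) auto
    then show "h u \<le> h v" using xy X_star_h by simp
  qed
  have h_concave: "concave_on {0<..} h"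
    using quantile_D0_concave unfolding h_def l_def .
  have "concave_on {0<..} l"
    unfolding l_def using concave_on_powr[OF a_pos a_le_1] C_pos by (intro concave_on_cmul) auto
  moreover have "l ` {0<..} \<subseteq> {0<..}" using C_pos by (auto simp: l_def)
  ultimately have "concave_on {0<..} (\<lambda>x. h (l x))"
    by (rule concave_on_compose_mono[OF h_concave h_mono])
  then show ?thesis by (rule concave_on_cong) (simp add: X_star_h)
qed

lemma X_star_feasible: "X_star D0 \<in> rce_feasible F_SSD Q Ps D0"
  unfolding rce_feasible_def law_def
proof (intro CollectI conjI X_star_payoff ballI)
  fix P' assume "P' \<in> Ps"
  then have "preceq F_SSD (distr P borel (X_star D0)) (distr P' borel (X_star D0))"
    using Ps_icv by (intro preceq_F_SSD_distr[OF _ _ _ _ mono_on_X_star concave_on_X_star X_star_nonneg]) auto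
  then show "preceq F_SSD D0 (distr P' borel (X_star D0))"
    by (simp only: distr_X_star)
qed

lemma truncated_nn_integral_X_star_le:
  assumes "X \<in> rce_feasible F_SSD Q Ps D0"
  shows "truncated_nn_integral P (X_star D0) b \<le> truncated_nn_integral P X b"
proof (rule truncated_nn_integral_le_of_preceq[OF prob_space_axioms _ AE_pos])
  show "X \<in> borel_measurable borel" "\<And>x. 0 < x \<Longrightarrow> 0 \<le> X x"
    using assms by (auto simp: rce_feasible_def payoffs_def)
  show "preceq F_SSD (distr P borel (X_star D0)) (distr P borel X)"
    using assms P_in_Ps by (auto simp: rce_feasible_def law_def distr_X_star)
qed (auto simp: X_star_nonneg mono_on_X_star)

lemma truncated_nn_integral_X_star_finite: "truncated_nn_integral P (X_star D0) b < \<infinity>"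
proof -
  have "truncated_nn_integral P (X_star D0) b \<le> (\<integral>\<^sup>+x. ennreal (norm (X_star D0 x)) \<partial>P)"
    unfolding truncated_nn_integral_def by (intro nn_integral_mono) (auto intro: ennreal_leI split: split_indicator)
  also have "\<dots> < \<infinity>"
    using square_integrable_imp_integrable[OF _ integrable_X_star_square] by (simp add: integrable_iff_bounded)
  finally show ?thesis .
qed

lemma nn_integral_Q_payoff:
  assumes "Y \<in> payoffs Q"
  shows "(\<integral>\<^sup>+x. ennreal (Y x) \<partial>Q) = ennreal (integral\<^sup>L Q Y)"
  using assms AE_Q_pos by (intro nn_integral_eq_integral) (auto simp: payoffs_def elim!: eventually_mono)

lemma price_X_star_le:
  assumes X: "X \<in> rce_feasible F_SSD Q Ps D0"
  shows "price r T Q (X_star D0) \<le> price r T Q X"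
proof -
  have X_payoff: "X \<in> payoffs Q" using X by (simp add: rce_feasible_def)
  then have X_meas [measurable]: "X \<in> borel_measurable borel" by (simp add: payoffs_def)
  have "ennreal (integral\<^sup>L Q (X_star D0)) \<le> ennreal (integral\<^sup>L Q X)"
    unfolding nn_integral_Q_payoff[OF X_star_payoff, symmetric] nn_integral_Q_payoff[OF X_payoff, symmetric]
      nn_integral_Q_layer_cake(1)[OF borel_measurable_X_star] nn_integral_Q_layer_cake(1)[OF X_meas]
    by (intro nn_integral_mono mult_left_mono truncated_nn_integral_X_star_le[OF X]) auto
  moreover have "0 \<le> integral\<^sup>L Q X"
    using AE_Q_pos X_payoff by (intro integral_nonneg_AE) (auto simp: payoffs_def elim!: eventually_mono)
  ultimately show ?thesis unfolding price_def by (simp add: ennreal_le_iff)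
qed

text \<open>Equal prices force the truncated integrals to agree for almost every threshold (they are
  ordered pointwise and have the same finite layer-cake integral), hence for all thresholds, and
  these determine the payoff.\<close>
lemma AE_eq_X_star:
  assumes X: "X \<in> rce_feasible F_SSD Q Ps D0" and price_eq: "price r T Q X = price r T Q (X_star D0)"
  shows "AE x in P. X x = X_star D0 x"
proof -
  have X_payoff: "X \<in> payoffs Q" using X by (simp add: rce_feasible_def)
  then have X_meas [measurable]: "X \<in> borel_measurable borel" and X_nonneg: "\<And>x. 0 < x \<Longrightarrow> 0 \<le> X x"
    by (auto simp: payoffs_def)
  define fX where "fX = (\<lambda>t. indicator {0<..} t * truncated_nn_integral P X (threshold t))"
  define fS where "fS = (\<lambda>t. indicator {0<..} t * truncated_nn_integral P (X_star D0) (threshold t))"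
  have [measurable]: "fX \<in> borel_measurable lborel" "fS \<in> borel_measurable lborel"
    unfolding fX_def fS_def by (fact nn_integral_Q_layer_cake(2)[OF X_meas] nn_integral_Q_layer_cake(2)[OF borel_measurable_X_star])+
  have fS_le: "fS t \<le> fX t" for t
    unfolding fX_def fS_def by (intro mult_left_mono truncated_nn_integral_X_star_le[OF X]) auto
  have "integral\<^sup>L Q X = integral\<^sup>L Q (X_star D0)" using price_eq by (simp add: price_def)
  then have "integral\<^sup>N lborel fX = integral\<^sup>N lborel fS" "integral\<^sup>N lborel fS \<noteq> \<infinity>"
    using nn_integral_Q_payoff[OF X_payoff] nn_integral_Q_payoff[OF X_star_payoff]
    by (simp_all add: fX_def fS_def nn_integral_Q_layer_cake(1)[symmetric])
  then have "(\<integral>\<^sup>+t. fX t - fS t \<partial>lborel) = 0"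
    by (subst nn_integral_diff) (auto simp: fS_le ennreal_diff_self)
  then have "AE t in lborel. fX t = fS t"
    by (subst (asm) nn_integral_0_iff_AE) (auto elim!: eventually_mono intro: antisym fS_le dest: ennreal_minus_eq_0)
  then have "AE t in lborel. 0 < t \<longrightarrow> truncated_nn_integral P X (threshold t) = truncated_nn_integral P (X_star D0) (threshold t)"
    by eventually_elim (auto simp: fX_def fS_def)
  then have eq: "truncated_nn_integral P X b = truncated_nn_integral P (X_star D0) b" for b
    using truncated_nn_integral_X_star_le[OF X] threshold_between
    by (intro truncated_nn_integral_eq_of_AE[OF _ AE_pos]) auto
  then have "AE x in P. ennreal (X x) = ennreal (X_star D0 x)"
    using truncated_nn_integral_X_star_finite
    by (intro AE_eq_of_truncated_nn_integral_eq[OF real_distribution_axioms]) auto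
  then show ?thesis
    using AE_pos by eventually_elim (metis X_nonneg X_star_nonneg ennreal_inj)
qed

theorem rce_unique_solution_X_star: "rce_unique_solution F_SSD r T Q Ps D0 P (X_star D0)"
  unfolding rce_unique_solution_def
  using X_star_feasible price_X_star_le AE_eq_X_star by blast

end

end

lemma lognormal_measure_density_powr:
  assumes "\<sigma> > 0"
  shows "lognormal_measure m2 \<sigma> = density (lognormal_measure m1 \<sigma>)
    (\<lambda>x. ennreal (exp (- (m2\<^sup>2 - m1\<^sup>2) / (2 * \<sigma>\<^sup>2)) * x powr ((m2 - m1) / \<sigma>\<^sup>2)))"
  unfolding lognormal_measure_density[OF assms assms, of m2 m1]
  using AE_lognormal_measure_pos[of m1 \<sigma>] by (intro density_cong) (auto simp: normal_density_ln_ratio[OF assms] elim!: eventually_mono)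

lemma AE_lr_lognormal_measure:
  assumes "\<sigma> > 0" "\<tau> > 0"
  shows "AE x in lognormal_measure m \<tau>. lr (lognormal_measure m1 \<sigma>) (lognormal_measure m2 \<sigma>) x =
    exp (- (m2\<^sup>2 - m1\<^sup>2) / (2 * \<sigma>\<^sup>2)) * x powr ((m2 - m1) / \<sigma>\<^sup>2)"
proof -
  interpret prob_space "lognormal_measure m1 \<sigma>"
    by (rule real_distribution.axioms[OF real_distribution_lognormal_measure[OF assms(1)]])
  have "AE x in lognormal_measure m1 \<sigma>. ennreal (exp (- (m2\<^sup>2 - m1\<^sup>2) / (2 * \<sigma>\<^sup>2)) * x powr ((m2 - m1) / \<sigma>\<^sup>2)) =
      RN_deriv (lognormal_measure m1 \<sigma>) (lognormal_measure m2 \<sigma>) x"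
    by (rule RN_deriv_unique[OF _ lognormal_measure_density_powr[OF assms(1), symmetric]]) measurable
  then have "AE x in lognormal_measure m1 \<sigma>. lr (lognormal_measure m1 \<sigma>) (lognormal_measure m2 \<sigma>) x =
      exp (- (m2\<^sup>2 - m1\<^sup>2) / (2 * \<sigma>\<^sup>2)) * x powr ((m2 - m1) / \<sigma>\<^sup>2)"
    unfolding lr_def by eventually_elim (metis enn2real_ennreal exp_ge_zero mult_nonneg_nonneg powr_ge_zero)
  then show ?thesis
    unfolding lognormal_measure_density[OF assms(1,2), of m m1] by (subst AE_density) (auto elim: eventually_mono)
qed

lemma sets_model_measure [simp, measurable_cong]: "sets (model_measure S0 T mu sg) = sets borel"
  by (simp add: model_measure_def lognormal_def)

lemma borel_measurable_lr [measurable]: "sets Q = sets borel \<Longrightarrow> lr Q P \<in> borel_measurable borel"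
  unfolding lr_def using borel_measurable_RN_deriv[of Q P] by (simp cong: measurable_cong_sets)

lemma model_measure_eq_lognormal_measure:
  assumes "0 < T" "0 < sg"
  shows "model_measure S0 T mu sg = lognormal_measure (ln S0 + (mu - sg\<^sup>2 / 2) * T) (sg * sqrt T)"
proof -
  have "sg\<^sup>2 * T = (sg * sqrt T)\<^sup>2" using assms by (simp add: power_mult_distrib)
  then show ?thesis using assms by (simp add: model_measure_def lognormal_def)
qed

lemma icv_le_model_measure:
  assumes "0 < T" "0 < sg" "sg \<le> s" "mu1 \<le> mu"
  shows "icv_le (model_measure S0 T mu1 s) (model_measure S0 T mu sg)"
proof -
  have mean: "ln S0 + (m - v\<^sup>2 / 2) * T + (v * sqrt T)\<^sup>2 / 2 = ln S0 + m * T" for m v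
    using assms(1) by (simp add: power_mult_distrib algebra_simps)
  show ?thesis
    unfolding model_measure_eq_lognormal_measure[OF assms(1,2)]
      model_measure_eq_lognormal_measure[OF assms(1) less_le_trans[OF assms(2,3)]]
    using assms by (intro icv_le_lognormal_measure) (auto simp: mean intro: mult_right_mono)
qed

locale lognormal_ambiguity =
  fixes T r S0 s sigma1 mu1 mu2 :: real
  assumes T_pos: "0 < T" and sigma1_pos: "0 < sigma1" and sigma1_le_s: "sigma1 \<le> s"
    and mu1_le_mu2: "mu1 \<le> mu2"
    and exponent_pos: "0 < (mu1 - r) / s\<^sup>2" and exponent_le_1: "(mu1 - r) / s\<^sup>2 \<le> 1"
begin

definition sd :: real where "sd = s * sqrt T"
definition mean_Q :: real where "mean_Q = ln S0 + (r - s\<^sup>2 / 2) * T"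
definition mean_P :: real where "mean_P = ln S0 + (mu1 - s\<^sup>2 / 2) * T"
definition C :: real where "C = exp (- (mean_P\<^sup>2 - mean_Q\<^sup>2) / (2 * sd\<^sup>2))"

lemma s_pos: "0 < s" using sigma1_pos sigma1_le_s by simp

lemma sd_pos: "0 < sd" unfolding sd_def using s_pos T_pos by simp

lemma model_measure_Q: "model_measure S0 T r s = lognormal_measure mean_Q sd"
  unfolding mean_Q_def sd_def by (rule model_measure_eq_lognormal_measure[OF T_pos s_pos])

lemma model_measure_P: "model_measure S0 T mu1 s = lognormal_measure mean_P sd"
  unfolding mean_P_def sd_def by (rule model_measure_eq_lognormal_measure[OF T_pos s_pos])

lemma exponent_eq: "(mean_P - mean_Q) / sd\<^sup>2 = (mu1 - r) / s\<^sup>2"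
proof -
  have "mean_P - mean_Q = (mu1 - r) * T" "sd\<^sup>2 = s\<^sup>2 * T"
    using T_pos by (simp_all add: mean_P_def mean_Q_def sd_def power_mult_distrib algebra_simps)
  then show ?thesis using T_pos by simp
qed

lemma model_set_iff:
  "P \<in> model_set S0 T mu1 mu2 sigma1 s \<longleftrightarrow>
    (\<exists>mu sg. P = model_measure S0 T mu sg \<and> mu1 \<le> mu \<and> mu \<le> mu2 \<and> sigma1 \<le> sg \<and> sg \<le> s)"
  by (auto simp: model_set_def)

lemma P_star_in_model_set: "model_measure S0 T mu1 s \<in> model_set S0 T mu1 mu2 sigma1 s"
  using mu1_le_mu2 sigma1_le_s by (auto simp: model_set_iff)

lemma AE_lr_model_measure:
  assumes "0 < sg"
  shows "AE x in model_measure S0 T mu sg.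
    lr (model_measure S0 T r s) (model_measure S0 T mu1 s) x = C * x powr ((mu1 - r) / s\<^sup>2)"
  unfolding model_measure_Q model_measure_P model_measure_eq_lognormal_measure[OF T_pos assms]
    C_def exponent_eq[symmetric]
  using assms T_pos by (intro AE_lr_lognormal_measure[OF sd_pos]) simp

lemma law_lr_model_measure:
  assumes "0 < sg"
  shows "law (model_measure S0 T mu sg) (lr (model_measure S0 T r s) (model_measure S0 T mu1 s)) =
    distr (model_measure S0 T mu sg) borel (\<lambda>x. C * x powr ((mu1 - r) / s\<^sup>2))"
  unfolding law_def using AE_lr_model_measure[OF assms] by (intro distr_cong_AE) auto

lemma C_pos: "0 < C" unfolding C_def by simp

lemma strict_mono_on_lr: "strict_mono_on {0<..} (\<lambda>x. C * x powr ((mu1 - r) / s\<^sup>2))"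
  using C_pos exponent_pos by (auto intro!: strict_mono_onI powr_less_mono2)

lemma preceq_law_S_T:
  assumes "mu1 \<le> mu" "sigma1 \<le> sg" "sg \<le> s"
  shows "preceq F_SSD (law (model_measure S0 T mu1 s) (\<lambda>x. x)) (law (model_measure S0 T mu sg) (\<lambda>x. x))"
  unfolding law_def using assms sigma1_pos T_pos
  by (intro preceq_F_SSD_distr icv_le_model_measure) (auto intro: mono_onI simp: concave_on_ident)

lemma least_favorable_P_star:
  "least_favorable F_SSD (model_measure S0 T r s) (model_set S0 T mu1 mu2 sigma1 s) (model_measure S0 T mu1 s)"
  unfolding least_favorable_def
proof (intro conjI ballI P_star_in_model_set)
  fix P assume "P \<in> model_set S0 T mu1 mu2 sigma1 s"
  then obtain mu sg where P: "P = model_measure S0 T mu sg" "mu1 \<le> mu" "sigma1 \<le> sg" "sg \<le> s"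
    by (auto simp: model_set_iff)
  then have "0 < sg" using sigma1_pos by simp
  have "concave_on {0<..} (\<lambda>x. C * x powr ((mu1 - r) / s\<^sup>2))"
    using concave_on_powr[OF exponent_pos exponent_le_1] C_pos by (intro concave_on_cmul) auto
  then show "preceq F_SSD (law (model_measure S0 T mu1 s) (lr (model_measure S0 T r s) (model_measure S0 T mu1 s)))
      (law P (lr (model_measure S0 T r s) (model_measure S0 T mu1 s)))"
    unfolding P law_lr_model_measure[OF s_pos] law_lr_model_measure[OF \<open>0 < sg\<close>]
    using P \<open>0 < sg\<close> T_pos C_pos strict_mono_on_imp_mono_on[OF strict_mono_on_lr]
    by (intro preceq_F_SSD_distr icv_le_model_measure) auto
qed

lemma continuous_cdf_law_lr:
  "continuous_on UNIV (cdf (law (model_measure S0 T mu1 s) (lr (model_measure S0 T r s) (model_measure S0 T mu1 s))))"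
  unfolding law_lr_model_measure[OF s_pos] unfolding model_measure_P
  by (intro continuous_cdf_distr_lognormal_measure[OF sd_pos] strict_mono_on_imp_inj_on[OF strict_mono_on_lr]) simp

lemma integrable_inverse_lr_power:
  "integrable (model_measure S0 T mu1 s) (\<lambda>x. (1 / lr (model_measure S0 T r s) (model_measure S0 T mu1 s) x) ^ n)"
proof -
  have "AE x in model_measure S0 T mu1 s.
      (1 / lr (model_measure S0 T r s) (model_measure S0 T mu1 s) x) ^ n = (1 / C) ^ n * x powr (- ((mu1 - r) / s\<^sup>2) * n)"
    using AE_lr_model_measure[OF s_pos, of mu1] AE_lognormal_measure_pos[of mean_P sd, folded model_measure_P]
  proof eventually_elim
    case (elim x)
    have "x powr (- ((mu1 - r) / s\<^sup>2) * n) = (x powr (- ((mu1 - r) / s\<^sup>2))) ^ n"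
      using elim(2) by (subst powr_realpow[symmetric]) (auto simp: powr_powr)
    then show ?case using elim(1) by (simp add: powr_minus_divide power_mult_distrib power_divide)
  qed
  moreover have "integrable (model_measure S0 T mu1 s) (\<lambda>x. (1 / C) ^ n * x powr (- ((mu1 - r) / s\<^sup>2) * n))"
    unfolding model_measure_P using integrable_lognormal_measure_powr[OF sd_pos] by simp
  ultimately show ?thesis by (subst integrable_cong_AE) auto
qed

lemma model_measure_Q_density:
  "model_measure S0 T r s = density (model_measure S0 T mu1 s) (\<lambda>x. ennreal (1 / (C * x powr ((mu1 - r) / s\<^sup>2))))"
proof -
  have "(mean_Q - mean_P) / sd\<^sup>2 = - ((mu1 - r) / s\<^sup>2)" using exponent_eq by (metis minus_diff_eq minus_divide_left)
  then have "exp (- (mean_Q\<^sup>2 - mean_P\<^sup>2) / (2 * sd\<^sup>2)) * x powr ((mean_Q - mean_P) / sd\<^sup>2) =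
      1 / (C * x powr ((mu1 - r) / s\<^sup>2))" for x
  proof -
    have "- (mean_Q\<^sup>2 - mean_P\<^sup>2) / (2 * sd\<^sup>2) = - (- (mean_P\<^sup>2 - mean_Q\<^sup>2) / (2 * sd\<^sup>2))"
      by (simp add: minus_divide_left)
    then have "exp (- (mean_Q\<^sup>2 - mean_P\<^sup>2) / (2 * sd\<^sup>2)) = inverse C" unfolding C_def by (metis exp_minus)
    then have "exp (- (mean_Q\<^sup>2 - mean_P\<^sup>2) / (2 * sd\<^sup>2)) * x powr ((mean_Q - mean_P) / sd\<^sup>2) =
        inverse C * x powr (- ((mu1 - r) / s\<^sup>2))"
      using \<open>(mean_Q - mean_P) / sd\<^sup>2 = _\<close> by (simp only:)
    then show ?thesis by (simp only: powr_minus divide_inverse inverse_mult_distrib mult_1_left)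
  qed
  then show ?thesis
    unfolding model_measure_Q model_measure_P by (simp add: lognormal_measure_density_powr[OF sd_pos, of mean_Q mean_P])
qed

lemma cost_efficiency_P_star: "cost_efficiency (model_measure S0 T mu1 s) C ((mu1 - r) / s\<^sup>2)"
proof (intro cost_efficiency.intro cost_efficiency_axioms.intro)
  show "real_distribution (model_measure S0 T mu1 s)"
    unfolding model_measure_P by (rule real_distribution_lognormal_measure[OF sd_pos])
  show "AE x in model_measure S0 T mu1 s. 0 < x"
    unfolding model_measure_P by (rule AE_lognormal_measure_pos)
  show "continuous_on UNIV (cdf (model_measure S0 T mu1 s))"
    using continuous_cdf_distr_lognormal_measure[OF sd_pos, of "\<lambda>x. x" mean_P]
    unfolding model_measure_P by (simp add: distr_id2)
  show "0 < cdf (model_measure S0 T mu1 s) x \<and> cdf (model_measure S0 T mu1 s) x < 1" if "0 < x" for x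
    unfolding model_measure_P by (rule cdf_lognormal_measure_strict[OF sd_pos that])
  have "AE x in model_measure S0 T mu1 s. (1 / lr (model_measure S0 T r s) (model_measure S0 T mu1 s) x)\<^sup>2 =
      (1 / (C * x powr ((mu1 - r) / s\<^sup>2)))\<^sup>2"
    using AE_lr_model_measure[OF s_pos, of mu1] by eventually_elim simp
  then show "integrable (model_measure S0 T mu1 s) (\<lambda>x. (1 / (C * x powr ((mu1 - r) / s\<^sup>2)))\<^sup>2)"
    using integrable_inverse_lr_power[of 2] by (subst integrable_cong_AE[symmetric]) auto
qed (use C_pos exponent_pos exponent_le_1 in auto)

lemma rce_unique_solution_P_star:
  assumes "real_distribution D0" "\<And>x. x < 0 \<Longrightarrow> cdf D0 x = 0"
    and "(\<integral>\<^sup>+u\<in>{0<..<1}. ennreal ((quantile (cdf D0) u)\<^sup>2) \<partial>lborel) < \<infinity>"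
    and concave: "concave_on {0<..} (\<lambda>x. quantile (cdf D0)
      (cdf (law (model_measure S0 T mu1 s) (lr (model_measure S0 T r s) (model_measure S0 T mu1 s))) x))"
  shows "rce_unique_solution F_SSD r T (model_measure S0 T r s) (model_set S0 T mu1 mu2 sigma1 s) D0
    (model_measure S0 T mu1 s) (\<lambda>x. quantile (cdf D0) (cdf (law (model_measure S0 T mu1 s) (\<lambda>y. y)) x))"
proof -
  interpret cost_efficiency "model_measure S0 T mu1 s" C "(mu1 - r) / s\<^sup>2"
    by (rule cost_efficiency_P_star)
  have "sets P = sets borel \<and> icv_le (model_measure S0 T mu1 s) P" if "P \<in> model_set S0 T mu1 mu2 sigma1 s" for P
    using that sigma1_pos T_pos by (auto simp: model_set_iff intro!: icv_le_model_measure)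
  then have "rce_unique_solution F_SSD r T Q (model_set S0 T mu1 mu2 sigma1 s) D0 (model_measure S0 T mu1 s)
      (X_star D0)"
    using assms concave P_star_in_model_set
    by (intro rce_unique_solution_X_star) (auto simp: law_lr_model_measure[OF s_pos])
  then show ?thesis
    by (simp add: model_measure_Q_density[symmetric] X_star_def[abs_def] law_def distr_id2)
qed

end

theorem mainTheorem6:
  fixes T r S0 s sigma1 mu1 mu2 :: real
  assumes "T > 0" and "S0 > 0" and "s > 0" and "0 < sigma1" and "sigma1 \<le> s"
    and "r < mu1" and "mu1 < mu2"
    and "0 < (mu1 - r) / s\<^sup>2" and "(mu1 - r) / s\<^sup>2 \<le> 1"
  shows
    "(\<forall>mu sg. mu1 \<le> mu \<and> mu \<le> mu2 \<and> sigma1 \<le> sg \<and> sg \<le> s \<longrightarrow>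
        preceq F_SSD (law (model_measure S0 T mu1 s) (\<lambda>x. x))
                     (law (model_measure S0 T mu sg) (\<lambda>x. x)))
     \<and> least_favorable F_SSD (model_measure S0 T r s) (model_set S0 T mu1 mu2 sigma1 s)
         (model_measure S0 T mu1 s)
     \<and> continuous_on UNIV
         (cdf (law (model_measure S0 T mu1 s) (lr (model_measure S0 T r s) (model_measure S0 T mu1 s))))
     \<and> integrable (model_measure S0 T mu1 s)
         (\<lambda>x. 1 / lr (model_measure S0 T r s) (model_measure S0 T mu1 s) x)
     \<and> integrable (model_measure S0 T mu1 s)
         (\<lambda>x. (1 / lr (model_measure S0 T r s) (model_measure S0 T mu1 s) x)\<^sup>2)
     \<and> (\<forall>D0. real_distribution D0
          \<and> (\<forall>x<0. cdf D0 x = 0)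
          \<and> (\<integral>\<^sup>+ u\<in>{0<..<1}. ennreal ((quantile (cdf D0) u)\<^sup>2) \<partial>lborel) < \<infinity>
          \<and> concave_on {0<..}
              (\<lambda>x. quantile (cdf D0)
                 (cdf (law (model_measure S0 T mu1 s)
                        (lr (model_measure S0 T r s) (model_measure S0 T mu1 s))) x))
        \<longrightarrow> rce_unique_solution F_SSD r T (model_measure S0 T r s) (model_set S0 T mu1 mu2 sigma1 s)
              D0 (model_measure S0 T mu1 s)
              (\<lambda>x. quantile (cdf D0) (cdf (law (model_measure S0 T mu1 s) (\<lambda>y. y)) x)))"
proof -
  interpret lognormal_ambiguity T r S0 s sigma1 mu1 mu2
    using assms by unfold_locales auto
  show ?thesis
    using preceq_law_S_T least_favorable_P_star continuous_cdf_law_lr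
      integrable_inverse_lr_power[of 1] integrable_inverse_lr_power[of 2] rce_unique_solution_P_star
    by auto
qed

end
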